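(* Let $\Omega\subset\mathbb{R}^3$ be a domain and let $\Phi:\Omega_\zeta\to\mathbb{A}_n^m$ be continuous in $\Omega_\zeta$. If $\int_{\partial\Delta_\zeta}\Phi(\zeta)\,d\zeta=0$ for every triangle $\Delta_\zeta$ whose closure $\overline{\Delta_\zeta}$ is contained in $\Omega_\zeta$, then $\Phi$ is monogenic in $\Omega_\zeta$.
   Context: Fix natural numbers $m\le n$. $\mathbb{A}_n^m$ is a commutative associative algebra with unit over $\mathbb{C}$ with a basis $\{I_k\}_{k=1}^n$ satisfying: (1) for $r,s\in\{1,\dots,m\}$, $I_rI_s=0$ if $r\ne s$ and $I_rI_r=I_r$; (2) for $r,s\in\{m+1,\dots,n\}$, $I_rI_s=\sum_{k=\max\{r,s\}+1}^{n}\Upsilon^{s}_{r,k}I_k$ with constants $\Upsilon^s_{r,k}\in\mathbb{C}$; (3) for each $s\in\{m+1,\dots,n\}$ there is a unique $u_s\in\{1,\dots,m\}$ such that for $r\in\{1,\dots,m\}$, $I_rI_s=I_s$ if $r=u_s$ and $0$ otherwise. Unit $1=\sum_{u=1}^mI_u$. $f_u(\sum_k\lambda_kI_k)=\lambda_u$, $u=1,\dots,m$. Let $e_1=1$, $e_2=\sum_ka_kI_k$, $e_3=\sum_kb_kI_k$ be linearly independent over $\mathbb{R}$; $\zeta=xe_1+ye_2+ze_3$, $E_3$ the real span of $e_1,e_2,e_3$, $Q_\zeta=\{xe_1+ye_2+ze_3:(x,y,z)\in Q\}$ for $Q\subset\mathbb{R}^3$ (a triangle $\Delta_\zeta$ means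 $\Delta_\zeta$ for a planar triangle $\Delta\subset\mathbb{R}^3$, and $\partial\Delta_\zeta$ its boundary curve). Standing assumption: $f_u(E_3)=\mathbb{C}$ for all $u$. A continuous $\Phi:\Omega_\zeta\to\mathbb{A}_n^m$ is monogenic if for every $\zeta\in\Omega_\zeta$ there is $\Phi'(\zeta)\in\mathbb{A}_n^m$ with $\lim_{\varepsilon\to0+}(\Phi(\zeta+\varepsilon h)-\Phi(\zeta))\varepsilon^{-1}=h\Phi'(\zeta)$ for all $h\in E_3$. Integral: for a Jordan rectifiable curve $\gamma$ and continuous $\Psi=\sum_k(U_k+iV_k)I_k$ on $\gamma_\zeta$ ($U_k,V_k$ real), $\int_{\gamma_\zeta}\Psi d\zeta:=\sum_kI_k\int_\gamma(U_k+iV_k)dx+\sum_ke_2I_k\int_\gamma(U_k+iV_k)dy+\sum_ke_3I_k\int_\gamma(U_k+iV_k)dz$. *)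

theory Defs
  imports "HOL-Analysis.Analysis"
begin

text \<open>Elements of the algebra A_n^m are represented by their coordinate functions
  k \<mapsto> lambda_k w.r.t. the basis I_1..I_n; coordinates outside 1..n are zero.
  The topology is the product topology on nat => complex (componentwise convergence,
  which on the finite-dimensional algebra is the usual one).\<close>

type_synonym alg = "nat \<Rightarrow> complex"

definition carrier_A :: "nat \<Rightarrow> alg set" where
  "carrier_A n = {a. \<forall>k. k \<notin> {1..n} \<longrightarrow> a k = 0}"

text \<open>Structure constants: I_r I_s = sum_k sc r s k I_k.  Ups r s k stands for
  Upsilon^s_{r,k}; u s stands for u_s.\<close>
definition sc :: "nat \<Rightarrow> nat \<Rightarrow> (nat \<Rightarrow> nat \<Rightarrow> nat \<Rightarrow> complex) \<Rightarrow> (nat \<Rightarrow> nat)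
                  \<Rightarrow> nat \<Rightarrow> nat \<Rightarrow> nat \<Rightarrow> complex" where
  "sc n m Ups u r s k =
     (if r \<le> m \<and> s \<le> m then (if r = s \<and> k = r then 1 else 0)
      else if m < r \<and> m < s then (if max r s < k \<and> k \<le> n then Ups r s k else 0)
      else if r \<le> m then (if r = u s \<and> k = s then 1 else 0)
      else (if s = u r \<and> k = r then 1 else 0))"

definition amul :: "nat \<Rightarrow> nat \<Rightarrow> (nat \<Rightarrow> nat \<Rightarrow> nat \<Rightarrow> complex) \<Rightarrow> (nat \<Rightarrow> nat)
                    \<Rightarrow> alg \<Rightarrow> alg \<Rightarrow> alg" where
  "amul n m Ups u x y = (\<lambda>k. \<Sum>r\<in>{1..n}. \<Sum>s\<in>{1..n}. x r * y s * sc n m Ups u r s k)"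

definition is_Anm :: "nat \<Rightarrow> nat \<Rightarrow> (nat \<Rightarrow> nat \<Rightarrow> nat \<Rightarrow> complex) \<Rightarrow> (nat \<Rightarrow> nat) \<Rightarrow> bool" where
  "is_Anm n m Ups u \<longleftrightarrow> 1 \<le> m \<and> m \<le> n \<and>
     (\<forall>s\<in>{m+1..n}. u s \<in> {1..m}) \<and>
     (\<forall>x\<in>carrier_A n. \<forall>y\<in>carrier_A n. amul n m Ups u x y = amul n m Ups u y x) \<and>
     (\<forall>x\<in>carrier_A n. \<forall>y\<in>carrier_A n. \<forall>z\<in>carrier_A n.
        amul n m Ups u (amul n m Ups u x y) z = amul n m Ups u x (amul n m Ups u y z))"

definition unitA :: "nat \<Rightarrow> alg" where
  "unitA m = (\<lambda>k. if k \<in> {1..m} then 1 else 0)"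

text \<open>zeta = x e_1 + y e_2 + z e_3 with e_1 = 1, e_2 = a, e_3 = b.\<close>
definition zmap :: "nat \<Rightarrow> alg \<Rightarrow> alg \<Rightarrow> real \<times> real \<times> real \<Rightarrow> alg" where
  "zmap m a b p = (\<lambda>k. complex_of_real (fst p) * unitA m k + complex_of_real (fst (snd p)) * a k
                       + complex_of_real (snd (snd p)) * b k)"

definition monogenic :: "nat \<Rightarrow> nat \<Rightarrow> (nat \<Rightarrow> nat \<Rightarrow> nat \<Rightarrow> complex) \<Rightarrow> (nat \<Rightarrow> nat)
                         \<Rightarrow> alg \<Rightarrow> alg \<Rightarrow> (alg \<Rightarrow> alg) \<Rightarrow> alg set \<Rightarrow> bool" where
  "monogenic n m Ups u a b Phi D \<longleftrightarrow>
     (\<forall>\<zeta>\<in>D. \<exists>Phi'\<in>carrier_A n. \<forall>p. let h = zmap m a b p in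
        ((\<lambda>\<epsilon>::real. (\<lambda>k. (Phi (\<lambda>j. \<zeta> j + complex_of_real \<epsilon> * h j) k - Phi \<zeta> k) / complex_of_real \<epsilon>))
          \<longlongrightarrow> amul n m Ups u h Phi') (at_right 0))"

text \<open>Integral of a complex function F along the oriented segment [P,Q] with respect
  to the coordinate c (dx, dy or dz).\<close>
definition edge_int :: "(real \<times> real \<times> real \<Rightarrow> complex) \<Rightarrow> real \<times> real \<times> real \<Rightarrow> real \<times> real \<times> real
                        \<Rightarrow> (real \<times> real \<times> real \<Rightarrow> real) \<Rightarrow> complex" where
  "edge_int F P Q c = integral {0..1} (\<lambda>t. F (P + t *\<^sub>R (Q - P)) * complex_of_real (c (Q - P)))"

definition tri_int :: "(real \<times> real \<times> real \<Rightarrow> complex) \<Rightarrow> real \<times> real \<times> real \<Rightarrow> real \<times> real \<times> real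
                       \<Rightarrow> real \<times> real \<times> real \<Rightarrow> (real \<times> real \<times> real \<Rightarrow> real) \<Rightarrow> complex" where
  "tri_int F A B C c = edge_int F A B c + edge_int F B C c + edge_int F C A c"

definition bnd_integral :: "nat \<Rightarrow> nat \<Rightarrow> (nat \<Rightarrow> nat \<Rightarrow> nat \<Rightarrow> complex) \<Rightarrow> (nat \<Rightarrow> nat)
       \<Rightarrow> alg \<Rightarrow> alg \<Rightarrow> (alg \<Rightarrow> alg) \<Rightarrow> real \<times> real \<times> real \<Rightarrow> real \<times> real \<times> real
       \<Rightarrow> real \<times> real \<times> real \<Rightarrow> alg" where
  "bnd_integral n m Ups u a b Phi A B C =
     (let J = (\<lambda>c k. if k \<in> {1..n} then tri_int (\<lambda>p. Phi (zmap m a b p) k) A B C c else 0);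
          X = J fst; Y = J (\<lambda>v. fst (snd v)); Z = J (\<lambda>v. snd (snd v))
      in (\<lambda>k. X k + amul n m Ups u a Y k + amul n m Ups u b Z k))"

end

theory Submission
  imports Defs "HOL-Complex_Analysis.Complex_Analysis"
begin

text \<open>Write \<open>F(p) = \<Phi>(\<zeta>(p))\<close> in real coordinates. The triangle condition makes the segment
  integrals \<open>G(q)\<close> of \<open>\<Phi> d\<zeta>\<close> over \<open>[p\<^sub>0, q]\<close> additive, so \<open>G\<close> is a primitive: \<open>dG\<^sub>q(h) = \<zeta>(h) F(q)\<close>.
  Multiplication by \<open>\<zeta>(h)\<close> is triangular in the basis \<open>I\<^sub>k\<close>, with diagonal entry \<open>f\<^sub>u(\<zeta>(h))\<close> for the
  block \<open>u\<close> of \<open>k\<close>, and associativity of the algebra rules out coupling between different blocks.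
  On a block \<open>u\<close> the standing assumption makes \<open>w = f\<^sub>u(\<zeta> - \<zeta>\<^sub>0)\<close> a genuine complex coordinate,
  completed by a real coordinate \<open>r\<close>. Along the triangular order, the \<open>k\<close>-th components of \<open>F\<close> and
  \<open>G\<close> turn out to be polynomials in \<open>w\<close>-bar and \<open>r\<close> with coefficients holomorphic in \<open>w\<close>. Such
  functions are twice differentiable, and the symmetry of the second derivative of \<open>G\<close> turns
  \<open>dG = \<zeta>(h) F\<close> into \<open>dF(h) = \<zeta>(h) dF(e\<^sub>1)\<close>, which is monogenicity with \<open>\<Phi>' = dF(e\<^sub>1)\<close>.\<close>

type_synonym R3 = "real \<times> real \<times> real"

lemma sum_lessThan_deriv_shift:
  fixes g :: "nat \<Rightarrow> complex"
  shows "(\<Sum>a<N. of_nat a * X^(a - 1) * g a) =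
         (\<Sum>a<N. X^a * (if Suc a < N then of_nat (Suc a) * g (Suc a) else 0))"
proof (cases N)
  case (Suc M)
  have "(\<Sum>a<Suc M. of_nat a * X^(a - 1) * g a) = (\<Sum>a<M. of_nat (Suc a) * X^a * g (Suc a))"
    by (subst sum.lessThan_Suc_shift) simp
  also have "\<dots> = (\<Sum>a<Suc M. X^a * (if Suc a < Suc M then of_nat (Suc a) * g (Suc a) else 0))"
    by (simp add: algebra_simps)
  finally show ?thesis using Suc by simp
qed simp

lemma sum_lessThan_if_less:
  fixes g :: "nat \<Rightarrow> 'a::comm_monoid_add"
  assumes "N \<le> M" shows "(\<Sum>b<M. if b < N then g b else 0) = (\<Sum>b<N. g b)"
proof -
  have "{..<M} \<inter> {b. b < N} = {..<N}" using assms by auto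
  then show ?thesis by (simp add: sum.If_cases)
qed

lemma holomorphic_on_if_const_zero[holomorphic_intros]:
  "(P \<Longrightarrow> f holomorphic_on S) \<Longrightarrow> (\<lambda>w. if P then f w else 0) holomorphic_on S"
  by (cases P) auto

lemma integral_reflect_01:
  fixes f :: "real \<Rightarrow> complex"
  shows "integral {0..1} (\<lambda>t. f (1 - t)) = integral {0..1} f"
proof -
  have "integral {0..1} (\<lambda>t. f (1 - t)) = integral {-1..0} (\<lambda>x. f (x + 1))"
    using Henstock_Kurzweil_Integration.integral_reflect_real[where a="-1" and b=0 and f="\<lambda>x. f (x + 1)"] by simp
  also have "\<dots> = integral {0..1} f"
    using integral_shift_real_ivl[where a=0 and b=1 and c=1 and f=f] by simp
  finally show ?thesis .
qed

lemma has_derivative_linear_times_continuous: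
  fixes L :: "'a::real_normed_vector \<Rightarrow> 'b::real_normed_field"
  assumes "bounded_linear L" "continuous (at p) g"
  shows "((\<lambda>q. L (q - p) * g q) has_derivative (\<lambda>h. L h * g p)) (at p)"
proof -
  interpret L: bounded_linear L by fact
  obtain K where K: "\<And>h. norm (L h) \<le> norm h * K" "K > 0"
    using L.pos_bounded by blast
  have "((\<lambda>h. g (p + h)) \<longlongrightarrow> g p) (at 0)"
    using assms(2) unfolding continuous_at by (rule LIM_offset_zero)
  then have g: "((\<lambda>h. g (p + h) - g p) \<longlongrightarrow> 0) (at 0)" by (rule LIM_zero)
  have "((\<lambda>h. norm (L (p + h - p) * g (p + h) - L (p - p) * g p - L h * g p) / norm h) \<longlongrightarrow> 0) (at 0)"
  proof (rule Lim_null_comparison)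
    show "\<forall>\<^sub>F h in at 0. norm (norm (L (p + h - p) * g (p + h) - L (p - p) * g p - L h * g p) / norm h)
         \<le> K * norm (g (p + h) - g p)"
    proof (rule eventuallyI)
      fix h
      have eq: "L (p + h - p) * g (p + h) - L (p - p) * g p - L h * g p = L h * (g (p + h) - g p)"
        by (simp add: L.zero algebra_simps)
      show "norm (norm (L (p + h - p) * g (p + h) - L (p - p) * g p - L h * g p) / norm h)
         \<le> K * norm (g (p + h) - g p)"
      proof (cases "h = 0")
        case False
        have "norm (L h * (g (p + h) - g p)) \<le> norm h * K * norm (g (p + h) - g p)"
          using K(1)[of h] by (simp add: norm_mult mult_right_mono)
        then show ?thesis unfolding eq using False
          by (simp add: divide_le_eq mult.commute mult.left_commute)
      qed simp
    qed
    show "((\<lambda>h. K * norm (g (p + h) - g p)) \<longlongrightarrow> 0) (at 0)"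
      using tendsto_mult_right_zero[OF tendsto_norm_zero[OF g]] by simp
  qed
  then show ?thesis
    unfolding has_derivative_at using assms(1) by (simp add: bounded_linear_mult_const)
qed

lemma has_derivative_imp_right_difference_quotient:
  fixes g :: "'a::real_normed_vector \<Rightarrow> complex"
  assumes "(g has_derivative D) (at p)"
  shows "((\<lambda>t. (g (p + t *\<^sub>R v) - g p) / complex_of_real t) \<longlongrightarrow> D v) (at_right 0)"
proof -
  interpret D: bounded_linear D using assms has_derivative_bounded_linear by blast
  have "((\<lambda>t. p + t *\<^sub>R v) has_derivative (\<lambda>t. t *\<^sub>R v)) (at 0 within {0<..})"
    by (auto intro!: derivative_eq_intros)
  moreover have "(g has_derivative D) (at (p + 0 *\<^sub>R v))" using assms by simp
  ultimately have "((\<lambda>t. g (p + t *\<^sub>R v)) has_derivative (\<lambda>t. D (t *\<^sub>R v))) (at 0 within {0<..})"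
    using has_derivative_compose by blast
  then have "((\<lambda>t. (1 / norm (t - 0)) *\<^sub>R (g (p + t *\<^sub>R v) - (g (p + 0 *\<^sub>R v) + D ((t - 0) *\<^sub>R v))))
      \<longlongrightarrow> 0) (at_right 0)"
    unfolding has_derivative_within by blast
  moreover have "\<forall>\<^sub>F t in at_right 0. (1 / norm (t - 0)) *\<^sub>R (g (p + t *\<^sub>R v) - (g (p + 0 *\<^sub>R v) + D ((t - 0) *\<^sub>R v)))
       = (g (p + t *\<^sub>R v) - g p) / complex_of_real t - D v"
    using eventually_at_right_less[of 0]
    by eventually_elim (simp add: D.scale scaleR_conv_of_real field_simps)
  ultimately have "((\<lambda>t. (g (p + t *\<^sub>R v) - g p) / complex_of_real t - D v) \<longlongrightarrow> 0) (at_right 0)"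
    using tendsto_cong by fastforce
  then show ?thesis by (simp add: LIM_zero_iff)
qed

lemma tendsto_fun_componentwise:
  fixes f :: "'x \<Rightarrow> nat \<Rightarrow> complex"
  assumes "\<And>k. ((\<lambda>e. f e k) \<longlongrightarrow> l k) F"
  shows "(f \<longlongrightarrow> l) F"
proof -
  have "limitin (product_topology (\<lambda>_. euclidean) UNIV) f l F"
    unfolding limitin_componentwise using assms by (simp add: PiE_UNIV_domain)
  then show ?thesis by (simp add: euclidean_product_topology)
qed

lemma exists_not_parallel_R3: "\<exists>v::R3. \<forall>c. v \<noteq> c *\<^sub>R d"
proof (cases "fst (snd d) = 0 \<and> snd (snd d) = 0")
  case True
  then show ?thesis by (intro exI[of _ "(0, 1, 0)"]) (auto simp: prod_eq_iff)
next
  case False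
  then show ?thesis by (intro exI[of _ "(1, 0, 0)"]) (auto simp: prod_eq_iff)
qed

lemma not_collinear_shift:
  fixes p0 p q v :: "'a::real_vector"
  assumes "collinear {p0, p, q}" "p \<noteq> p0" "\<And>c. v \<noteq> c *\<^sub>R (p - p0)" "e \<noteq> 0"
  shows "\<not> collinear {p0, p, q + e *\<^sub>R v}"
proof
  have "collinear {p0, q, p}" using assms(1) by (simp add: insert_commute)
  then obtain w where w: "q = w *\<^sub>R p0 + (1 - w) *\<^sub>R p"
    using assms(2) unfolding collinear_3_expand by auto
  assume "collinear {p0, p, q + e *\<^sub>R v}"
  then have "collinear {p0, q + e *\<^sub>R v, p}" by (simp add: insert_commute)
  then obtain w' where w': "q + e *\<^sub>R v = w' *\<^sub>R p0 + (1 - w') *\<^sub>R p"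
    using assms(2) unfolding collinear_3_expand by auto
  have "e *\<^sub>R v = (q + e *\<^sub>R v) - q" by simp
  also have "\<dots> = (w' *\<^sub>R p0 + (1 - w') *\<^sub>R p) - (w *\<^sub>R p0 + (1 - w) *\<^sub>R p)"
    by (simp only: w'[symmetric] w[symmetric])
  also have "\<dots> = (w - w') *\<^sub>R (p - p0)"
    by (simp add: scaleR_diff_left scaleR_diff_right)
  finally have ev: "e *\<^sub>R v = (w - w') *\<^sub>R (p - p0)" .
  have "v = (1 / e) *\<^sub>R (e *\<^sub>R v)" using assms(4) by simp
  also have "\<dots> = ((w - w') / e) *\<^sub>R (p - p0)" by (simp add: ev)
  finally show False using assms(3) by blast
qed

lemma eq_0_if_eventually_0_along_ray:
  fixes \<phi> :: "'a::real_normed_vector \<Rightarrow> 'b::{t2_space,zero}"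
  assumes "isCont \<phi> q" "\<forall>\<^sub>F e in at_right 0. \<phi> (q + e *\<^sub>R v) = 0"
  shows "\<phi> q = 0"
proof -
  have "((\<lambda>e. q + e *\<^sub>R v) \<longlongrightarrow> q) (at_right 0)"
    by (rule tendsto_eq_intros refl)+ simp
  with assms(1) have "((\<lambda>e. \<phi> (q + e *\<^sub>R v)) \<longlongrightarrow> \<phi> q) (at_right 0)"
    by (rule isCont_tendsto_compose)
  moreover have "((\<lambda>e. \<phi> (q + e *\<^sub>R v)) \<longlongrightarrow> 0) (at_right 0)"
    using assms(2) by (rule tendsto_eventually)
  ultimately show ?thesis by (rule tendsto_unique[OF trivial_limit_at_right_real])
qed

section \<open>Polynomials in conjugate \<open>w\<close> and \<open>r\<close> with holomorphic coefficients\<close>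

locale chart =
  fixes \<xi> :: "R3 \<Rightarrow> complex" and \<rho> :: "R3 \<Rightarrow> real" and p0 :: R3 and \<delta> :: real
    and x y \<kappa> :: R3
  assumes bounded_linear_\<xi>: "bounded_linear \<xi>" and bounded_linear_\<rho>: "bounded_linear \<rho>"
    and \<xi>_x: "\<xi> x = 1" and \<xi>_y: "\<xi> y = \<i>" and \<xi>_\<kappa>: "\<xi> \<kappa> = 0"
    and \<rho>_x: "\<rho> x = 0" and \<rho>_y: "\<rho> y = 0" and \<rho>_\<kappa>: "\<rho> \<kappa> = 1"
    and chart_basis: "\<And>v. v = Re (\<xi> v) *\<^sub>R x + Im (\<xi> v) *\<^sub>R y + \<rho> v *\<^sub>R \<kappa>"
    and \<delta>_pos: "\<delta> > 0"
begin

definition w_coord :: "R3 \<Rightarrow> complex" where "w_coord p = \<xi> (p - p0)"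
definition r_coord :: "R3 \<Rightarrow> real" where "r_coord p = \<rho> (p - p0)"
definition nbhd :: "R3 set" where "nbhd = {p. cmod (w_coord p) < \<delta> \<and> \<bar>r_coord p\<bar> < \<delta>}"
definition chart_pt :: "complex \<Rightarrow> real \<Rightarrow> R3" where
  "chart_pt w r = p0 + Re w *\<^sub>R x + Im w *\<^sub>R y + r *\<^sub>R \<kappa>"

text \<open>The real-linear form \<open>A dw + B d(w-bar) + C dr\<close> applied to \<open>h\<close>.\<close>
abbreviation wr_form :: "complex \<Rightarrow> complex \<Rightarrow> complex \<Rightarrow> R3 \<Rightarrow> complex" where
  "wr_form A B C h \<equiv> \<xi> h * A + cnj (\<xi> h) * B + complex_of_real (\<rho> h) * C"

definition mixed_poly :: "nat \<Rightarrow> (nat \<Rightarrow> nat \<Rightarrow> complex \<Rightarrow> complex) \<Rightarrow> R3 \<Rightarrow> complex" where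
  "mixed_poly N c p = (\<Sum>a<N. \<Sum>b<N. cnj (w_coord p)^a * complex_of_real (r_coord p)^b * c a b (w_coord p))"

definition holo_coeffs :: "(nat \<Rightarrow> nat \<Rightarrow> complex \<Rightarrow> complex) \<Rightarrow> bool" where
  "holo_coeffs c \<longleftrightarrow> (\<forall>a b. c a b holomorphic_on ball 0 \<delta>)"

definition mixed_poly_fun :: "(R3 \<Rightarrow> complex) \<Rightarrow> bool" where
  "mixed_poly_fun f \<longleftrightarrow> (\<exists>N c. holo_coeffs c \<and> (\<forall>p\<in>nbhd. f p = mixed_poly N c p))"

definition coeffs_deriv_w :: "(nat \<Rightarrow> nat \<Rightarrow> complex \<Rightarrow> complex) \<Rightarrow> nat \<Rightarrow> nat \<Rightarrow> complex \<Rightarrow> complex" where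
  "coeffs_deriv_w c a b w = deriv (c a b) w"

definition coeffs_deriv_wbar ::
    "nat \<Rightarrow> (nat \<Rightarrow> nat \<Rightarrow> complex \<Rightarrow> complex) \<Rightarrow> nat \<Rightarrow> nat \<Rightarrow> complex \<Rightarrow> complex" where
  "coeffs_deriv_wbar N c a b w = (if Suc a < N then of_nat (Suc a) * c (Suc a) b w else 0)"

definition coeffs_deriv_r ::
    "nat \<Rightarrow> (nat \<Rightarrow> nat \<Rightarrow> complex \<Rightarrow> complex) \<Rightarrow> nat \<Rightarrow> nat \<Rightarrow> complex \<Rightarrow> complex" where
  "coeffs_deriv_r N c a b w = (if Suc b < N then of_nat (Suc b) * c a (Suc b) w else 0)"

lemma \<xi>_linear: "\<xi> (u + v) = \<xi> u + \<xi> v" "\<xi> (u - v) = \<xi> u - \<xi> v" "\<xi> (r *\<^sub>R u) = r *\<^sub>R \<xi> u"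
  using bounded_linear_\<xi> by (auto simp: linear_add linear_diff linear_scale bounded_linear.linear)

lemma \<rho>_linear: "\<rho> (u + v) = \<rho> u + \<rho> v" "\<rho> (u - v) = \<rho> u - \<rho> v" "\<rho> (r *\<^sub>R u) = r *\<^sub>R \<rho> u"
  using bounded_linear_\<rho> by (auto simp: linear_add linear_diff linear_scale bounded_linear.linear)

lemma w_coord_chart_pt[simp]: "w_coord (chart_pt w r) = w"
  by (simp add: w_coord_def chart_pt_def \<xi>_linear \<xi>_x \<xi>_y \<xi>_\<kappa> complex_eq_iff)

lemma r_coord_chart_pt[simp]: "r_coord (chart_pt w r) = r"
  by (simp add: r_coord_def chart_pt_def \<rho>_linear \<rho>_x \<rho>_y \<rho>_\<kappa>)

lemma chart_pt_w_coord_r_coord[simp]: "chart_pt (w_coord p) (r_coord p) = p"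
proof -
  have "p - p0 = Re (w_coord p) *\<^sub>R x + Im (w_coord p) *\<^sub>R y + r_coord p *\<^sub>R \<kappa>"
    unfolding w_coord_def r_coord_def by (rule chart_basis)
  then show ?thesis unfolding chart_pt_def by (simp add: algebra_simps)
qed

lemma w_coord_has_derivative[derivative_intros]: "(w_coord has_derivative \<xi>) (at p within S)"
  unfolding w_coord_def using bounded_linear_\<xi>
  by (auto intro!: derivative_eq_intros simp: \<xi>_linear bounded_linear_imp_has_derivative)

lemma r_coord_has_derivative[derivative_intros]: "(r_coord has_derivative \<rho>) (at p within S)"
  unfolding r_coord_def using bounded_linear_\<rho>
  by (auto intro!: derivative_eq_intros simp: \<rho>_linear bounded_linear_imp_has_derivative)

lemma open_nbhd: "open nbhd"
proof -
  have "continuous_on UNIV w_coord" "continuous_on UNIV r_coord"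
    using w_coord_has_derivative r_coord_has_derivative
    by (meson has_derivative_continuous continuous_at_imp_continuous_on)+
  moreover have "nbhd = w_coord -` ball 0 \<delta> \<inter> r_coord -` {-\<delta><..<\<delta>}"
    by (auto simp: nbhd_def abs_less_iff)
  ultimately show ?thesis by (simp add: open_Int open_vimage)
qed

lemma chart_pt_in_nbhd: "cmod w < \<delta> \<Longrightarrow> \<bar>r\<bar> < \<delta> \<Longrightarrow> chart_pt w r \<in> nbhd"
  by (simp add: nbhd_def)

lemma p0_in_nbhd: "p0 \<in> nbhd"
  using \<delta>_pos by (simp add: nbhd_def w_coord_def r_coord_def \<xi>_linear \<rho>_linear)

lemma nbhd_subset_ball: "nbhd \<subseteq> ball p0 (\<delta> * (norm x + norm y + norm \<kappa> + 1))"
proof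
  fix p assume p: "p \<in> nbhd"
  have "\<bar>Re (w_coord p)\<bar> \<le> \<delta>" "\<bar>Im (w_coord p)\<bar> \<le> \<delta>" "\<bar>r_coord p\<bar> \<le> \<delta>"
    using p abs_Re_le_cmod[of "w_coord p"] abs_Im_le_cmod[of "w_coord p"] by (auto simp: nbhd_def)
  have "p - p0 = Re (w_coord p) *\<^sub>R x + Im (w_coord p) *\<^sub>R y + r_coord p *\<^sub>R \<kappa>"
    unfolding w_coord_def r_coord_def by (rule chart_basis)
  then have "norm (p - p0) \<le> norm (Re (w_coord p) *\<^sub>R x) + norm (Im (w_coord p) *\<^sub>R y) + norm (r_coord p *\<^sub>R \<kappa>)"
    by (metis norm_triangle_ineq norm_triangle_mono order.refl)
  also have "\<dots> = \<bar>Re (w_coord p)\<bar> * norm x + \<bar>Im (w_coord p)\<bar> * norm y + \<bar>r_coord p\<bar> * norm \<kappa>"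
    by simp
  also have "\<dots> \<le> \<delta> * norm x + \<delta> * norm y + \<delta> * norm \<kappa>"
    using \<open>\<bar>Re (w_coord p)\<bar> \<le> \<delta>\<close> \<open>\<bar>Im (w_coord p)\<bar> \<le> \<delta>\<close> \<open>\<bar>r_coord p\<bar> \<le> \<delta>\<close>
    by (intro add_mono mult_right_mono) auto
  also have "\<dots> < \<delta> * (norm x + norm y + norm \<kappa> + 1)"
    using \<delta>_pos by (simp add: algebra_simps)
  finally show "p \<in> ball p0 (\<delta> * (norm x + norm y + norm \<kappa> + 1))"
    by (simp add: dist_norm norm_minus_commute)
qed

lemma wr_form_decomposition:
  assumes "bounded_linear L"
  shows "L v = wr_form ((L x - \<i> * L y) / 2) ((L x + \<i> * L y) / 2) (L \<kappa>) v"
proof -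
  interpret L: bounded_linear L by fact
  have "L v = L (Re (\<xi> v) *\<^sub>R x + Im (\<xi> v) *\<^sub>R y + \<rho> v *\<^sub>R \<kappa>)" using chart_basis[of v] by simp
  also have "\<dots> = of_real (Re (\<xi> v)) * L x + of_real (Im (\<xi> v)) * L y + of_real (\<rho> v) * L \<kappa>"
    by (simp add: L.add L.scale scaleR_conv_of_real)
  finally show ?thesis by (simp add: complex_eq_iff field_simps)
qed


lemma holo_coeffs_has_field_derivative:
  "holo_coeffs c \<Longrightarrow> w \<in> ball 0 \<delta> \<Longrightarrow> (c a b has_field_derivative deriv (c a b) w) (at w)"
  unfolding holo_coeffs_def by (meson holomorphic_derivI open_ball)

lemma mixed_poly_term_has_derivative:
  assumes "holo_coeffs c" "p \<in> nbhd"
  shows "((\<lambda>p. cnj (w_coord p)^a * complex_of_real (r_coord p)^b * c a b (w_coord p)) has_derivative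
     (\<lambda>h. of_nat a * cnj (\<xi> h) * cnj (w_coord p)^(a - 1) * complex_of_real (r_coord p)^b * c a b (w_coord p)
        + cnj (w_coord p)^a * (of_nat b * complex_of_real (\<rho> h) * complex_of_real (r_coord p)^(b - 1)) * c a b (w_coord p)
        + cnj (w_coord p)^a * complex_of_real (r_coord p)^b * (deriv (c a b) (w_coord p) * \<xi> h))) (at p)"
proof -
  have "w_coord p \<in> ball 0 \<delta>" using assms(2) by (simp add: nbhd_def)
  then have c: "((\<lambda>p. c a b (w_coord p)) has_derivative (\<lambda>h. deriv (c a b) (w_coord p) * \<xi> h)) (at p)"
    using has_derivative_compose[OF w_coord_has_derivative
        holo_coeffs_has_field_derivative[OF assms(1), unfolded has_field_derivative_def]]
    by (simp add: o_def)
  have cw: "((\<lambda>p. cnj (w_coord p)) has_derivative (\<lambda>h. cnj (\<xi> h))) (at p)"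
    using has_derivative_compose[OF w_coord_has_derivative bounded_linear_imp_has_derivative[OF bounded_linear_cnj]]
    by (simp add: o_def)
  have rw: "((\<lambda>p. complex_of_real (r_coord p)) has_derivative (\<lambda>h. complex_of_real (\<rho> h))) (at p)"
    by (auto intro!: derivative_eq_intros)
  show ?thesis
    by (rule derivative_eq_intros has_derivative_power cw rw c refl)+ (simp add: algebra_simps)
qed

lemma mixed_poly_wbar_part:
  "(\<Sum>a<N. \<Sum>b<N. of_nat a * cnj (\<xi> h) * cnj (w_coord p)^(a - 1) * complex_of_real (r_coord p)^b * c a b (w_coord p))
   = cnj (\<xi> h) * mixed_poly N (coeffs_deriv_wbar N c) p"
proof -
  let ?X = "cnj (w_coord p)" and ?R = "complex_of_real (r_coord p)"
  have "(\<Sum>a<N. \<Sum>b<N. of_nat a * cnj (\<xi> h) * ?X^(a - 1) * ?R^b * c a b (w_coord p))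
      = cnj (\<xi> h) * (\<Sum>b<N. \<Sum>a<N. of_nat a * ?X^(a - 1) * (?R^b * c a b (w_coord p)))"
    by (subst sum.swap) (simp add: sum_distrib_left algebra_simps)
  also have "\<dots> = cnj (\<xi> h) * (\<Sum>b<N. \<Sum>a<N. ?X^a *
      (if Suc a < N then of_nat (Suc a) * (?R^b * c (Suc a) b (w_coord p)) else 0))"
    by (subst sum_lessThan_deriv_shift) simp
  also have "\<dots> = cnj (\<xi> h) * mixed_poly N (coeffs_deriv_wbar N c) p"
    unfolding mixed_poly_def coeffs_deriv_wbar_def
    by (subst (2) sum.swap) (auto intro!: sum.cong simp: algebra_simps)
  finally show ?thesis .
qed

lemma mixed_poly_r_part:
  "(\<Sum>a<N. \<Sum>b<N. cnj (w_coord p)^a * (of_nat b * complex_of_real (\<rho> h) * complex_of_real (r_coord p)^(b - 1))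
      * c a b (w_coord p))
   = complex_of_real (\<rho> h) * mixed_poly N (coeffs_deriv_r N c) p"
proof -
  let ?X = "cnj (w_coord p)" and ?R = "complex_of_real (r_coord p)"
  have "(\<Sum>a<N. \<Sum>b<N. ?X^a * (of_nat b * complex_of_real (\<rho> h) * ?R^(b - 1)) * c a b (w_coord p))
      = complex_of_real (\<rho> h) * (\<Sum>a<N. \<Sum>b<N. of_nat b * ?R^(b - 1) * (?X^a * c a b (w_coord p)))"
    by (simp add: sum_distrib_left algebra_simps)
  also have "\<dots> = complex_of_real (\<rho> h) * (\<Sum>a<N. \<Sum>b<N. ?R^b *
      (if Suc b < N then of_nat (Suc b) * (?X^a * c a (Suc b) (w_coord p)) else 0))"
    by (subst sum_lessThan_deriv_shift) simp
  also have "\<dots> = complex_of_real (\<rho> h) * mixed_poly N (coeffs_deriv_r N c) p"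
    unfolding mixed_poly_def coeffs_deriv_r_def by (auto intro!: sum.cong simp: algebra_simps)
  finally show ?thesis .
qed

lemma mixed_poly_has_derivative:
  assumes "holo_coeffs c" "p \<in> nbhd"
  shows "(mixed_poly N c has_derivative wr_form (mixed_poly N (coeffs_deriv_w c) p)
     (mixed_poly N (coeffs_deriv_wbar N c) p) (mixed_poly N (coeffs_deriv_r N c) p)) (at p)"
proof (rule has_derivative_eq_rhs)
  show "(mixed_poly N c has_derivative (\<lambda>h. \<Sum>a<N. \<Sum>b<N.
       of_nat a * cnj (\<xi> h) * cnj (w_coord p)^(a - 1) * complex_of_real (r_coord p)^b * c a b (w_coord p)
     + cnj (w_coord p)^a * (of_nat b * complex_of_real (\<rho> h) * complex_of_real (r_coord p)^(b - 1)) * c a b (w_coord p)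
     + cnj (w_coord p)^a * complex_of_real (r_coord p)^b * (deriv (c a b) (w_coord p) * \<xi> h))) (at p)"
    unfolding mixed_poly_def[abs_def]
    by (intro has_derivative_sum mixed_poly_term_has_derivative assms)
  have w_part: "(\<Sum>a<N. \<Sum>b<N. cnj (w_coord p)^a * complex_of_real (r_coord p)^b * (deriv (c a b) (w_coord p) * \<xi> h))
      = \<xi> h * mixed_poly N (coeffs_deriv_w c) p" for h
    unfolding mixed_poly_def coeffs_deriv_w_def by (simp add: sum_distrib_left algebra_simps)
  then show "(\<lambda>h. \<Sum>a<N. \<Sum>b<N.
       of_nat a * cnj (\<xi> h) * cnj (w_coord p)^(a - 1) * complex_of_real (r_coord p)^b * c a b (w_coord p)
     + cnj (w_coord p)^a * (of_nat b * complex_of_real (\<rho> h) * complex_of_real (r_coord p)^(b - 1)) * c a b (w_coord p)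
     + cnj (w_coord p)^a * complex_of_real (r_coord p)^b * (deriv (c a b) (w_coord p) * \<xi> h)) =
    wr_form (mixed_poly N (coeffs_deriv_w c) p) (mixed_poly N (coeffs_deriv_wbar N c) p)
      (mixed_poly N (coeffs_deriv_r N c) p)"
    by (simp only: sum.distrib mixed_poly_wbar_part mixed_poly_r_part w_part) (simp add: algebra_simps)
qed

lemma holo_coeffs_deriv_w: "holo_coeffs c \<Longrightarrow> holo_coeffs (coeffs_deriv_w c)"
  unfolding holo_coeffs_def coeffs_deriv_w_def[abs_def] by (auto intro: holomorphic_deriv)

lemma holo_coeffs_deriv_wbar: "holo_coeffs c \<Longrightarrow> holo_coeffs (coeffs_deriv_wbar N c)"
  unfolding holo_coeffs_def coeffs_deriv_wbar_def[abs_def] by (auto intro!: holomorphic_intros)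

lemma holo_coeffs_deriv_r: "holo_coeffs c \<Longrightarrow> holo_coeffs (coeffs_deriv_r N c)"
  unfolding holo_coeffs_def coeffs_deriv_r_def[abs_def] by (auto intro!: holomorphic_intros)

lemma mixed_poly_add: "mixed_poly N (\<lambda>a b w. c1 a b w + c2 a b w) p = mixed_poly N c1 p + mixed_poly N c2 p"
  unfolding mixed_poly_def by (simp add: sum.distrib algebra_simps)

lemma mixed_poly_cmult: "mixed_poly N (\<lambda>a b w. k * c a b w) p = k * mixed_poly N c p"
  unfolding mixed_poly_def by (simp add: sum_distrib_left algebra_simps)

lemma mixed_poly_truncate:
  assumes "N \<le> M"
  shows "mixed_poly M (\<lambda>a b w. if a < N \<and> b < N then c a b w else 0) p = mixed_poly N c p"
proof -
  let ?t = "\<lambda>a b. cnj (w_coord p)^a * complex_of_real (r_coord p)^b * c a b (w_coord p)"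
  have "mixed_poly M (\<lambda>a b w. if a < N \<and> b < N then c a b w else 0) p =
      (\<Sum>a<M. if a < N then (\<Sum>b<M. if b < N then ?t a b else 0) else 0)"
    unfolding mixed_poly_def by (auto intro!: sum.cong)
  also have "\<dots> = (\<Sum>a<N. \<Sum>b<N. ?t a b)"
    using assms by (simp add: sum_lessThan_if_less)
  finally show ?thesis by (simp add: mixed_poly_def)
qed

lemma mixed_poly_cong: "(\<And>a b. c a b (w_coord p) = c' a b (w_coord p)) \<Longrightarrow> mixed_poly N c p = mixed_poly N c' p"
  unfolding mixed_poly_def by simp

lemma mixed_poly_funI: "holo_coeffs c \<Longrightarrow> mixed_poly_fun (mixed_poly N c)"
  unfolding mixed_poly_fun_def by blast

lemma mixed_poly_fun_cong:
  assumes "mixed_poly_fun f" "\<And>p. p \<in> nbhd \<Longrightarrow> f p = g p" shows "mixed_poly_fun g"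
  using assms unfolding mixed_poly_fun_def by metis

lemma mixed_poly_fun_add:
  assumes "mixed_poly_fun f" "mixed_poly_fun g" shows "mixed_poly_fun (\<lambda>p. f p + g p)"
proof -
  obtain N1 c1 where 1: "holo_coeffs c1" "\<forall>p\<in>nbhd. f p = mixed_poly N1 c1 p"
    using assms(1) mixed_poly_fun_def by auto
  obtain N2 c2 where 2: "holo_coeffs c2" "\<forall>p\<in>nbhd. g p = mixed_poly N2 c2 p"
    using assms(2) mixed_poly_fun_def by auto
  let ?c = "\<lambda>a b w. (if a < N1 \<and> b < N1 then c1 a b w else 0) + (if a < N2 \<and> b < N2 then c2 a b w else 0)"
  have "holo_coeffs ?c" using 1 2 unfolding holo_coeffs_def by (auto intro!: holomorphic_intros)
  moreover have "\<forall>p\<in>nbhd. f p + g p = mixed_poly (max N1 N2) ?c p"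
    using 1 2 by (simp add: mixed_poly_add mixed_poly_truncate)
  ultimately show ?thesis unfolding mixed_poly_fun_def by blast
qed

lemma mixed_poly_fun_cmult:
  assumes "mixed_poly_fun f" shows "mixed_poly_fun (\<lambda>p. k * f p)"
proof -
  obtain N c where 1: "holo_coeffs c" "\<forall>p\<in>nbhd. f p = mixed_poly N c p"
    using assms mixed_poly_fun_def by auto
  have "holo_coeffs (\<lambda>a b w. k * c a b w)"
    using 1 unfolding holo_coeffs_def by (auto intro!: holomorphic_intros)
  moreover have "\<forall>p\<in>nbhd. k * f p = mixed_poly N (\<lambda>a b w. k * c a b w) p"
    using 1 by (simp add: mixed_poly_cmult)
  ultimately show ?thesis unfolding mixed_poly_fun_def by blast
qed

lemma mixed_poly_fun_holomorphic:
  assumes "h holomorphic_on ball 0 \<delta>" shows "mixed_poly_fun (\<lambda>p. h (w_coord p))"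
proof -
  have "holo_coeffs (\<lambda>a b. h)" using assms unfolding holo_coeffs_def by auto
  moreover have "\<forall>p\<in>nbhd. h (w_coord p) = mixed_poly 1 (\<lambda>a b. h) p" by (simp add: mixed_poly_def)
  ultimately show ?thesis unfolding mixed_poly_fun_def by blast
qed

lemma mixed_poly_fun_diff:
  "mixed_poly_fun f \<Longrightarrow> mixed_poly_fun g \<Longrightarrow> mixed_poly_fun (\<lambda>p. f p - g p)"
  using mixed_poly_fun_add[of f "\<lambda>p. - g p"] mixed_poly_fun_cmult[of g "-1"] by simp

lemma mixed_poly_fun_sum:
  "finite S \<Longrightarrow> (\<And>i. i \<in> S \<Longrightarrow> mixed_poly_fun (f i)) \<Longrightarrow> mixed_poly_fun (\<lambda>p. \<Sum>i\<in>S. f i p)"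
  by (induction S rule: finite_induct)
     (auto intro: mixed_poly_fun_add mixed_poly_fun_holomorphic[of "\<lambda>_. 0", simplified])

lemma mixed_poly_fun_has_derivative:
  assumes "mixed_poly_fun f"
  obtains fw fwb fr where "mixed_poly_fun fw" "mixed_poly_fun fwb" "mixed_poly_fun fr"
    "\<And>p. p \<in> nbhd \<Longrightarrow> (f has_derivative wr_form (fw p) (fwb p) (fr p)) (at p)"
proof -
  obtain N c where c: "holo_coeffs c" "\<forall>p\<in>nbhd. f p = mixed_poly N c p"
    using assms mixed_poly_fun_def by auto
  show thesis
  proof
    show "mixed_poly_fun (mixed_poly N (coeffs_deriv_w c))" "mixed_poly_fun (mixed_poly N (coeffs_deriv_wbar N c))"
      "mixed_poly_fun (mixed_poly N (coeffs_deriv_r N c))"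
      using c holo_coeffs_deriv_w holo_coeffs_deriv_wbar holo_coeffs_deriv_r mixed_poly_funI by blast+
    show "(f has_derivative wr_form (mixed_poly N (coeffs_deriv_w c) p)
      (mixed_poly N (coeffs_deriv_wbar N c) p) (mixed_poly N (coeffs_deriv_r N c) p)) (at p)"
      if "p \<in> nbhd" for p
      by (rule has_derivative_transform_within_open[OF mixed_poly_has_derivative[OF c(1) that] open_nbhd that])
         (use c in auto)
  qed
qed


lemma mixed_poly_fun_antideriv_wbar:
  assumes "mixed_poly_fun \<alpha>"
  obtains A Aw Ar where "mixed_poly_fun A" "mixed_poly_fun Aw" "mixed_poly_fun Ar"
    "\<And>p. p \<in> nbhd \<Longrightarrow> (A has_derivative wr_form (Aw p) (\<alpha> p) (Ar p)) (at p)"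
proof -
  obtain N c where c: "holo_coeffs c" "\<forall>p\<in>nbhd. \<alpha> p = mixed_poly N c p"
    using assms mixed_poly_fun_def by auto
  define c' where "c' = (\<lambda>a b w. if 0 < a \<and> a \<le> N \<and> b < N then c (a - 1) b w / of_nat a else 0)"
  have c': "holo_coeffs c'" using c unfolding holo_coeffs_def c'_def by (auto intro!: holomorphic_intros)
  have "coeffs_deriv_wbar (Suc N) c' = (\<lambda>a b w. if a < N \<and> b < N then c a b w else 0)"
    unfolding coeffs_deriv_wbar_def c'_def by (intro ext) (auto simp del: of_nat_Suc)
  then have "mixed_poly (Suc N) (coeffs_deriv_wbar (Suc N) c') p = \<alpha> p" if "p \<in> nbhd" for p
    using c that by (simp add: mixed_poly_truncate)
  then show thesis
    using mixed_poly_has_derivative[OF c', of _ "Suc N"]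
    by (intro that[OF mixed_poly_funI[OF c', of "Suc N"] mixed_poly_funI[OF holo_coeffs_deriv_w[OF c']]
          mixed_poly_funI[OF holo_coeffs_deriv_r[OF c', of "Suc N"]]]) simp
qed

lemma mixed_poly_fun_antideriv_r:
  assumes "mixed_poly_fun \<gamma>"
  obtains B Bw Bwb where "mixed_poly_fun B" "mixed_poly_fun Bw" "mixed_poly_fun Bwb"
    "\<And>p. p \<in> nbhd \<Longrightarrow> (B has_derivative wr_form (Bw p) (Bwb p) (\<gamma> p)) (at p)"
    "\<And>p. r_coord p = 0 \<Longrightarrow> B p = 0"
proof -
  obtain N c where c: "holo_coeffs c" "\<forall>p\<in>nbhd. \<gamma> p = mixed_poly N c p"
    using assms mixed_poly_fun_def by auto
  define c' where "c' = (\<lambda>a b w. if 0 < b \<and> b \<le> N \<and> a < N then c a (b - 1) w / of_nat b else 0)"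
  have c': "holo_coeffs c'" using c unfolding holo_coeffs_def c'_def by (auto intro!: holomorphic_intros)
  have "coeffs_deriv_r (Suc N) c' = (\<lambda>a b w. if a < N \<and> b < N then c a b w else 0)"
    unfolding coeffs_deriv_r_def c'_def by (intro ext) (auto simp del: of_nat_Suc)
  then have "mixed_poly (Suc N) (coeffs_deriv_r (Suc N) c') p = \<gamma> p" if "p \<in> nbhd" for p
    using c that by (simp add: mixed_poly_truncate)
  moreover have "mixed_poly (Suc N) c' p = 0" if "r_coord p = 0" for p
  proof -
    have term_zero: "cnj (w_coord p)^a * complex_of_real (r_coord p)^b * c' a b (w_coord p) = 0" for a b
      by (cases b) (simp_all add: that c'_def)
    show ?thesis unfolding mixed_poly_def term_zero by simp
  qed
  ultimately show thesis
    using mixed_poly_has_derivative[OF c', of _ "Suc N"]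
    by (intro that[OF mixed_poly_funI[OF c', of "Suc N"] mixed_poly_funI[OF holo_coeffs_deriv_w[OF c']]
          mixed_poly_funI[OF holo_coeffs_deriv_wbar[OF c', of "Suc N"]]]) simp_all
qed

lemma chart_pt_has_derivative_w:
  "((\<lambda>w. chart_pt w r) has_derivative (\<lambda>dw. Re dw *\<^sub>R x + Im dw *\<^sub>R y)) (at w)"
  unfolding chart_pt_def
  by (auto intro!: derivative_eq_intros bounded_linear_imp_has_derivative bounded_linear_Re bounded_linear_Im)

lemma chart_pt_has_derivative_r:
  "((\<lambda>t. chart_pt w (t * r)) has_derivative (\<lambda>dt. (dt * r) *\<^sub>R \<kappa>)) (at t within S)"
  unfolding chart_pt_def by (auto intro!: derivative_eq_intros simp: algebra_simps)

lemma \<xi>_chart_direction: "\<xi> (Re dw *\<^sub>R x + Im dw *\<^sub>R y) = dw"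
  by (simp add: \<xi>_linear \<xi>_x \<xi>_y complex_eq_iff)

lemma \<rho>_chart_direction: "\<rho> (Re dw *\<^sub>R x + Im dw *\<^sub>R y) = 0"
  by (simp add: \<rho>_linear \<rho>_x \<rho>_y)

lemma slice_holomorphic:
  assumes "\<And>p. p \<in> nbhd \<Longrightarrow> (Q has_derivative (\<lambda>h. \<xi> h * \<Psi> p + complex_of_real (\<rho> h) * \<gamma> p)) (at p)"
  shows "(\<lambda>w. Q (chart_pt w 0)) holomorphic_on ball 0 \<delta>"
proof -
  have "((\<lambda>w. Q (chart_pt w 0)) has_field_derivative \<Psi> (chart_pt w 0)) (at w)" if "w \<in> ball 0 \<delta>" for w
  proof -
    have "chart_pt w 0 \<in> nbhd" using that \<delta>_pos by (intro chart_pt_in_nbhd) auto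
    from has_derivative_compose[OF chart_pt_has_derivative_w assms[OF this]]
    show ?thesis
      by (simp add: o_def has_field_derivative_def \<xi>_chart_direction \<rho>_chart_direction
          mult.commute[of _ "\<Psi> (chart_pt w 0)"])
  qed
  then show ?thesis using holomorphic_on_open open_ball by blast
qed

lemma constant_along_r:
  assumes D: "\<And>p. p \<in> nbhd \<Longrightarrow> (\<Phi> has_derivative (\<lambda>h. \<xi> h * X p + cnj (\<xi> h) * Y p)) (at p)"
    and p: "p \<in> nbhd"
  shows "\<Phi> p = \<Phi> (chart_pt (w_coord p) 0)"
proof -
  define \<phi> where "\<phi> = (\<lambda>t. \<Phi> (chart_pt (w_coord p) (t * r_coord p)))"
  have in_nbhd: "chart_pt (w_coord p) (t * r_coord p) \<in> nbhd" if "t \<in> {0..1}" for t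
  proof (rule chart_pt_in_nbhd)
    show "cmod (w_coord p) < \<delta>" using p by (simp add: nbhd_def)
    have "\<bar>t * r_coord p\<bar> \<le> \<bar>r_coord p\<bar>" using that by (simp add: abs_mult mult_left_le_one_le)
    then show "\<bar>t * r_coord p\<bar> < \<delta>" using p by (simp add: nbhd_def)
  qed
  have "\<exists>c. \<forall>t\<in>{0..1}. \<phi> t = c"
  proof (rule has_derivative_zero_constant)
    fix t :: real assume "t \<in> {0..1}"
    from has_derivative_compose[OF chart_pt_has_derivative_r has_derivative_at_withinI[OF D[OF in_nbhd[OF this]]]]
    show "(\<phi> has_derivative (\<lambda>h. 0)) (at t within {0..1})"
      by (simp add: \<phi>_def o_def \<xi>_linear \<xi>_\<kappa>)
  qed auto
  then have "\<phi> 1 = \<phi> 0" by force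
  then show ?thesis unfolding \<phi>_def by simp
qed

text \<open>Subtracting antiderivatives in \<open>w\<close>-bar and in \<open>r\<close> (the latter vanishing on \<open>r = 0\<close>) leaves a
  function that is constant in \<open>r\<close> and holomorphic in \<open>w\<close> on the slice \<open>r = 0\<close>.\<close>
lemma mixed_poly_fun_of_derivative:
  assumes \<alpha>: "mixed_poly_fun \<alpha>" and \<beta>: "mixed_poly_fun \<beta>"
    and D: "\<And>p. p \<in> nbhd \<Longrightarrow> (g has_derivative wr_form (\<Psi> p) (\<alpha> p) (\<beta> p)) (at p)"
  shows "mixed_poly_fun g"
proof -
  obtain A Aw Ar where A: "mixed_poly_fun A" "mixed_poly_fun Aw" "mixed_poly_fun Ar"
    "\<And>p. p \<in> nbhd \<Longrightarrow> (A has_derivative wr_form (Aw p) (\<alpha> p) (Ar p)) (at p)"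
    using mixed_poly_fun_antideriv_wbar[OF \<alpha>] by blast
  define \<gamma> where "\<gamma> = (\<lambda>p. \<beta> p - Ar p)"
  obtain B Bw Bwb where B: "mixed_poly_fun B" "mixed_poly_fun Bw" "mixed_poly_fun Bwb"
    "\<And>p. p \<in> nbhd \<Longrightarrow> (B has_derivative wr_form (Bw p) (Bwb p) (\<gamma> p)) (at p)"
    "\<And>p. r_coord p = 0 \<Longrightarrow> B p = 0"
    using mixed_poly_fun_antideriv_r[OF mixed_poly_fun_diff[OF \<beta> A(3)]] unfolding \<gamma>_def by blast
  define Q where "Q = (\<lambda>p. g p - A p)"
  have DQ: "(Q has_derivative (\<lambda>h. \<xi> h * (\<Psi> p - Aw p) + complex_of_real (\<rho> h) * \<gamma> p)) (at p)"
    if "p \<in> nbhd" for p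
    unfolding Q_def using has_derivative_diff[OF D[OF that] A(4)[OF that]]
    by (rule has_derivative_eq_rhs) (simp add: \<gamma>_def algebra_simps)
  define \<Phi> where "\<Phi> = (\<lambda>p. Q p - B p)"
  have D\<Phi>: "(\<Phi> has_derivative (\<lambda>h. \<xi> h * (\<Psi> p - Aw p - Bw p) + cnj (\<xi> h) * - Bwb p)) (at p)"
    if "p \<in> nbhd" for p
    unfolding \<Phi>_def using has_derivative_diff[OF DQ[OF that] B(4)[OF that]]
    by (rule has_derivative_eq_rhs) (simp add: algebra_simps)
  have "mixed_poly_fun (\<lambda>p. A p + B p + Q (chart_pt (w_coord p) 0))"
    using A(1) B(1) slice_holomorphic[OF DQ]
    by (intro mixed_poly_fun_add mixed_poly_fun_holomorphic)
  moreover have "A p + B p + Q (chart_pt (w_coord p) 0) = g p" if "p \<in> nbhd" for p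
    using constant_along_r[OF D\<Phi> that] B(5)[of "chart_pt (w_coord p) 0"]
    by (simp add: \<Phi>_def Q_def) algebra
  ultimately show ?thesis by (rule mixed_poly_fun_cong)
qed

lemma holo_coeffs_analytic: "holo_coeffs c \<Longrightarrow> w \<in> ball 0 \<delta> \<Longrightarrow> c a b analytic_on {w}"
  unfolding holo_coeffs_def by (meson analytic_on_open analytic_on_subset empty_subsetI insert_subset open_ball)

lemma deriv_coeffs_cmult:
  "holo_coeffs c \<Longrightarrow> p \<in> nbhd \<Longrightarrow> deriv (\<lambda>w. k * c a b w) (w_coord p) = k * deriv (c a b) (w_coord p)"
  by (simp add: nbhd_def deriv_cmult_at holo_coeffs_analytic)

lemma mixed_poly_deriv_wbar_w:
  "holo_coeffs c \<Longrightarrow> p \<in> nbhd \<Longrightarrow>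
   mixed_poly N (coeffs_deriv_wbar N (coeffs_deriv_w c)) p = mixed_poly N (coeffs_deriv_w (coeffs_deriv_wbar N c)) p"
  by (rule mixed_poly_cong) (auto simp: coeffs_deriv_wbar_def[abs_def] coeffs_deriv_w_def deriv_coeffs_cmult)

lemma mixed_poly_deriv_r_w:
  "holo_coeffs c \<Longrightarrow> p \<in> nbhd \<Longrightarrow>
   mixed_poly N (coeffs_deriv_r N (coeffs_deriv_w c)) p = mixed_poly N (coeffs_deriv_w (coeffs_deriv_r N c)) p"
  by (rule mixed_poly_cong) (auto simp: coeffs_deriv_r_def[abs_def] coeffs_deriv_w_def deriv_coeffs_cmult)

lemma mixed_poly_deriv_r_wbar:
  "mixed_poly N (coeffs_deriv_r N (coeffs_deriv_wbar N c)) p = mixed_poly N (coeffs_deriv_wbar N (coeffs_deriv_r N c)) p"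
  by (rule mixed_poly_cong) (auto simp: coeffs_deriv_r_def coeffs_deriv_wbar_def)

lemma mixed_poly_fun_second_derivative_symmetric:
  assumes "mixed_poly_fun G"
  obtains G' G'' where "\<And>p. p \<in> nbhd \<Longrightarrow> (G has_derivative (\<lambda>h. G' h p)) (at p)"
    "\<And>h p. p \<in> nbhd \<Longrightarrow> (G' h has_derivative (\<lambda>k. G'' h k p)) (at p)"
    "\<And>h k p. p \<in> nbhd \<Longrightarrow> G'' h k p = G'' k h p"
proof -
  obtain N c where c: "holo_coeffs c" "\<forall>p\<in>nbhd. G p = mixed_poly N c p"
    using assms mixed_poly_fun_def by auto
  let ?Dw = "coeffs_deriv_w" and ?Dwb = "coeffs_deriv_wbar N" and ?Dr = "coeffs_deriv_r N"
  define G' where "G' = (\<lambda>h p. wr_form (mixed_poly N (?Dw c) p) (mixed_poly N (?Dwb c) p) (mixed_poly N (?Dr c) p) h)"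
  define second where "second = (\<lambda>d p k. wr_form (mixed_poly N (?Dw (d c)) p) (mixed_poly N (?Dwb (d c)) p)
      (mixed_poly N (?Dr (d c)) p) k)"
  define G'' where "G'' = (\<lambda>h k p. wr_form (second ?Dw p k) (second ?Dwb p k) (second ?Dr p k) h)"
  have hc: "holo_coeffs (?Dw c)" "holo_coeffs (?Dwb c)" "holo_coeffs (?Dr c)"
    using c holo_coeffs_deriv_w holo_coeffs_deriv_wbar holo_coeffs_deriv_r by auto
  show thesis
  proof
    show "(G has_derivative (\<lambda>h. G' h p)) (at p)" if p: "p \<in> nbhd" for p
      unfolding G'_def
      by (rule has_derivative_transform_within_open[OF mixed_poly_has_derivative[OF c(1) p] open_nbhd p])
         (use c in auto)
    show "(G' h has_derivative (\<lambda>k. G'' h k p)) (at p)" if p: "p \<in> nbhd" for h p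
      unfolding G'_def G''_def second_def
      by (intro has_derivative_add has_derivative_mult_right mixed_poly_has_derivative hc p)
    show "G'' h k p = G'' k h p" if p: "p \<in> nbhd" for h k p
      unfolding G''_def second_def
      using mixed_poly_deriv_wbar_w[OF c(1) p] mixed_poly_deriv_r_w[OF c(1) p] mixed_poly_deriv_r_wbar[of N c p]
      by (simp add: algebra_simps)
  qed
qed


lemma sum_wr_form_decomposition:
  assumes "\<And>s. bounded_linear (L s)"
  shows "(\<Sum>s\<in>S. L s h * X s) = wr_form (\<Sum>s\<in>S. (L s x - \<i> * L s y) / 2 * X s)
     (\<Sum>s\<in>S. (L s x + \<i> * L s y) / 2 * X s) (\<Sum>s\<in>S. L s \<kappa> * X s) h"
proof -
  have "(\<Sum>s\<in>S. L s h * X s) = (\<Sum>s\<in>S. wr_form ((L s x - \<i> * L s y) / 2) ((L s x + \<i> * L s y) / 2) (L s \<kappa>) h * X s)"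
    by (intro sum.cong refl) (subst wr_form_decomposition[OF assms, of _ h], rule refl)
  then show ?thesis by (simp add: sum.distrib sum_distrib_left algebra_simps)
qed

lemma mixed_poly_fun_derivative_apply:
  assumes G: "mixed_poly_fun G" and L: "\<And>p. p \<in> nbhd \<Longrightarrow> (G has_derivative L p) (at p)"
  shows "mixed_poly_fun (\<lambda>p. L p v)"
proof -
  obtain fw fwb fr where f: "mixed_poly_fun fw" "mixed_poly_fun fwb" "mixed_poly_fun fr"
    "\<And>p. p \<in> nbhd \<Longrightarrow> (G has_derivative wr_form (fw p) (fwb p) (fr p)) (at p)"
    using mixed_poly_fun_has_derivative[OF G] by blast
  have "mixed_poly_fun (\<lambda>p. wr_form (fw p) (fwb p) (fr p) v)"
    by (intro mixed_poly_fun_add mixed_poly_fun_cmult f[unfolded mult.commute[of "\<xi> v"]])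
  moreover have "wr_form (fw p) (fwb p) (fr p) v = L p v" if "p \<in> nbhd" for p
    using fun_cong[OF has_derivative_unique[OF f(4)[OF that] L[OF that]], of v] by simp
  ultimately show ?thesis by (rule mixed_poly_fun_cong)
qed

lemma mixed_poly_fun_differentiable:
  assumes "mixed_poly_fun f" "p \<in> nbhd"
  shows "f differentiable (at p)"
proof -
  obtain fw fwb fr where "mixed_poly_fun fw" "mixed_poly_fun fwb" "mixed_poly_fun fr"
    and D: "\<And>p. p \<in> nbhd \<Longrightarrow> (f has_derivative wr_form (fw p) (fwb p) (fr p)) (at p)"
    using mixed_poly_fun_has_derivative[OF assms(1)] by blast
  show ?thesis by (rule differentiableI[OF D[OF assms(2)]])
qed

end

lemma chart_exists:
  fixes \<alpha> \<beta> :: complex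
  defines "\<xi> \<equiv> \<lambda>h::R3. complex_of_real (fst h) + complex_of_real (fst (snd h)) * \<alpha> + complex_of_real (snd (snd h)) * \<beta>"
  assumes "\<i> \<in> range \<xi>"
  shows "\<exists>\<rho> x y \<kappa>. \<forall>\<delta>>0. chart \<xi> \<rho> \<delta> x y \<kappa>"
proof -
  have "linear \<xi>" unfolding \<xi>_def by (rule linearI) (simp_all add: algebra_simps scaleR_conv_of_real)
  then have bl: "bounded_linear \<xi>" by (simp add: linear_conv_bounded_linear)
  have "Im \<alpha> \<noteq> 0 \<or> Im \<beta> \<noteq> 0"
    using assms(2) unfolding \<xi>_def by (auto simp: complex_eq_iff)
  then show ?thesis
  proof
    assume A: "Im \<alpha> \<noteq> 0"
    define \<rho> :: "R3 \<Rightarrow> real" where "\<rho> = (\<lambda>v. snd (snd v))"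
    have "bounded_linear \<rho>" unfolding \<rho>_def by (intro bounded_linear_compose[OF bounded_linear_snd] bounded_linear_snd)
    moreover have "\<xi> (1, 0, 0) = 1" "\<xi> (- Re \<alpha> / Im \<alpha>, 1 / Im \<alpha>, 0) = \<i>"
      "\<xi> (- Re \<beta> + Re \<alpha> * Im \<beta> / Im \<alpha>, - Im \<beta> / Im \<alpha>, 1) = 0"
      "\<And>v. v = Re (\<xi> v) *\<^sub>R (1, 0, 0) + Im (\<xi> v) *\<^sub>R (- Re \<alpha> / Im \<alpha>, 1 / Im \<alpha>, 0)
               + \<rho> v *\<^sub>R (- Re \<beta> + Re \<alpha> * Im \<beta> / Im \<alpha>, - Im \<beta> / Im \<alpha>, 1)"
      unfolding \<xi>_def \<rho>_def using A by (simp_all add: complex_eq_iff prod_eq_iff field_simps)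
    ultimately show ?thesis using bl unfolding chart_def \<rho>_def by (intro exI) auto
  next
    assume B: "Im \<beta> \<noteq> 0"
    define \<rho> :: "R3 \<Rightarrow> real" where "\<rho> = (\<lambda>v. fst (snd v))"
    have "bounded_linear \<rho>" unfolding \<rho>_def by (intro bounded_linear_compose[OF bounded_linear_fst] bounded_linear_snd)
    moreover have "\<xi> (1, 0, 0) = 1" "\<xi> (- Re \<beta> / Im \<beta>, 0, 1 / Im \<beta>) = \<i>"
      "\<xi> (- Re \<alpha> + Re \<beta> * Im \<alpha> / Im \<beta>, 1, - Im \<alpha> / Im \<beta>) = 0"
      "\<And>v. v = Re (\<xi> v) *\<^sub>R (1, 0, 0) + Im (\<xi> v) *\<^sub>R (- Re \<beta> / Im \<beta>, 0, 1 / Im \<beta>)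
               + \<rho> v *\<^sub>R (- Re \<alpha> + Re \<beta> * Im \<alpha> / Im \<beta>, 1, - Im \<alpha> / Im \<beta>)"
      unfolding \<xi>_def \<rho>_def using B by (simp_all add: complex_eq_iff prod_eq_iff field_simps)
    ultimately show ?thesis using bl unfolding chart_def \<rho>_def by (intro exI) auto
  qed
qed

section \<open>Multiplication in the algebra\<close>

definition lmul_coeff :: "nat \<Rightarrow> nat \<Rightarrow> (nat \<Rightarrow> nat \<Rightarrow> nat \<Rightarrow> complex) \<Rightarrow> (nat \<Rightarrow> nat)
     \<Rightarrow> alg \<Rightarrow> alg \<Rightarrow> nat \<Rightarrow> nat \<Rightarrow> R3 \<Rightarrow> complex" where
  "lmul_coeff n m Ups u a b k s h = (\<Sum>r\<in>{1..n}. zmap m a b h r * sc n m Ups u r s k)"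

definition block_of :: "nat \<Rightarrow> (nat \<Rightarrow> nat) \<Rightarrow> nat \<Rightarrow> nat" where
  "block_of m u k = (if k \<le> m then k else u k)"

definition basis_vec :: "nat \<Rightarrow> alg" where "basis_vec j = (\<lambda>i. if i = j then 1 else 0)"

lemma amul_zmap_eq_sum_lmul_coeff:
  "amul n m Ups u (zmap m a b h) X k = (\<Sum>s\<in>{1..n}. lmul_coeff n m Ups u a b k s h * X s)"
  unfolding amul_def lmul_coeff_def
  by (subst sum.swap) (simp add: sum_distrib_right sum_distrib_left algebra_simps)

lemma bounded_linear_zmap_component: "bounded_linear (\<lambda>h. zmap m a b h r)"
proof -
  have "linear (\<lambda>h. zmap m a b h r)"
    by (rule linearI) (simp_all add: zmap_def algebra_simps scaleR_conv_of_real)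
  then show ?thesis by (simp add: linear_conv_bounded_linear)
qed

lemma bounded_linear_lmul_coeff: "bounded_linear (lmul_coeff n m Ups u a b k s)"
  unfolding lmul_coeff_def[abs_def]
  by (intro bounded_linear_sum bounded_linear_mult_const bounded_linear_zmap_component)

lemma amul_zmap_split:
  "amul n m Ups u (zmap m a b d) y k = of_real (fst d) * amul n m Ups u (unitA m) y k
     + of_real (fst (snd d)) * amul n m Ups u a y k + of_real (snd (snd d)) * amul n m Ups u b y k"
  unfolding amul_def zmap_def by (simp add: sum.distrib sum_distrib_left algebra_simps)

lemma amul_eq_0_outside: "k \<notin> {1..n} \<Longrightarrow> amul n m Ups u x y k = 0"
  unfolding amul_def sc_def by (auto intro!: sum.neutral)

lemma amul_add_right: "amul n m Ups u x (\<lambda>s. y1 s + y2 s) k = amul n m Ups u x y1 k + amul n m Ups u x y2 k"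
  unfolding amul_def by (simp add: sum.distrib algebra_simps)

lemma amul_cmult_right: "amul n m Ups u x (\<lambda>s. y s * c) k = amul n m Ups u x y k * c"
  unfolding amul_def by (simp add: sum_distrib_left sum_distrib_right algebra_simps)

lemma amul_cong_right: "(\<And>s. s \<in> {1..n} \<Longrightarrow> y s = y' s) \<Longrightarrow> amul n m Ups u x y k = amul n m Ups u x y' k"
  unfolding amul_def by simp

lemma sc_11: "r \<le> m \<Longrightarrow> s \<le> m \<Longrightarrow> sc n m Ups u r s k = (if r = s \<and> k = r then 1 else 0)"
  by (simp add: sc_def)
lemma sc_22: "m < r \<Longrightarrow> m < s \<Longrightarrow> sc n m Ups u r s k = (if max r s < k \<and> k \<le> n then Ups r s k else 0)"
  by (simp add: sc_def)
lemma sc_21: "m < r \<Longrightarrow> s \<le> m \<Longrightarrow> sc n m Ups u r s k = (if s = u r \<and> k = r then 1 else 0)"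
  by (simp add: sc_def)

lemma amul_unitA_left:
  assumes "is_Anm n m Ups u" "k \<in> {1..n}"
  shows "amul n m Ups u (unitA m) y k = y k"
proof -
  have mn: "m \<le> n" and us: "\<And>s. s \<in> {m+1..n} \<Longrightarrow> u s \<in> {1..m}"
    using assms(1) unfolding is_Anm_def by auto
  have unit_col: "(\<Sum>r\<in>{1..n}. unitA m r * sc n m Ups u r s k) = (if s = k then 1 else 0)"
    if s: "s \<in> {1..n}" for s
  proof -
    have "(\<Sum>r\<in>{1..n}. unitA m r * sc n m Ups u r s k)
        = (\<Sum>r\<in>{1..n}. if r = (if s \<le> m then s else u s) \<and> s = k then 1 else 0)"
      using assms(2) s us[of s] mn by (intro sum.cong refl) (auto simp: unitA_def sc_def)
    then show ?thesis using assms(2) s us[of s] mn by (auto simp: sum.delta)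
  qed
  have "amul n m Ups u (unitA m) y k = (\<Sum>s\<in>{1..n}. y s * (\<Sum>r\<in>{1..n}. unitA m r * sc n m Ups u r s k))"
    unfolding amul_def by (subst sum.swap) (simp add: sum_distrib_left algebra_simps)
  also have "\<dots> = (\<Sum>s\<in>{1..n}. if s = k then y s else 0)"
    by (rule sum.cong[OF refl]) (simp only: unit_col, simp)
  finally show ?thesis using assms(2) by simp
qed

lemma zmap_e1: "zmap m a b (1, 0, 0) = unitA m"
  by (simp add: zmap_def)

lemma sum_lmul_coeff_e1:
  "is_Anm n m Ups u \<Longrightarrow> k \<in> {1..n} \<Longrightarrow> (\<Sum>s\<in>{1..n}. lmul_coeff n m Ups u a b k s (1, 0, 0) * X s) = X k"
  by (simp only: amul_zmap_eq_sum_lmul_coeff[symmetric] zmap_e1 amul_unitA_left)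

lemma amul_basis_vec_right:
  assumes "s \<in> {1..n}" shows "amul n m Ups u x (basis_vec s) k = (\<Sum>r\<in>{1..n}. x r * sc n m Ups u r s k)"
proof -
  have "(\<Sum>s'\<in>{1..n}. x r * basis_vec s s' * sc n m Ups u r s' k) = x r * sc n m Ups u r s k" for r
  proof -
    have "(\<Sum>s'\<in>{1..n}. x r * basis_vec s s' * sc n m Ups u r s' k)
        = (\<Sum>s'\<in>{1..n}. if s' = s then x r * sc n m Ups u r s' k else 0)"
      by (rule sum.cong) (auto simp: basis_vec_def)
    then show ?thesis using assms by (simp add: sum.delta)
  qed
  then show ?thesis unfolding amul_def by simp
qed

lemma amul_basis_vec:
  assumes "r \<in> {1..n}" "s \<in> {1..n}"
  shows "amul n m Ups u (basis_vec r) (basis_vec s) k = sc n m Ups u r s k"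
proof -
  have "amul n m Ups u (basis_vec r) (basis_vec s) k = (\<Sum>r'\<in>{1..n}. basis_vec r r' * sc n m Ups u r' s k)"
    using assms by (simp only: amul_basis_vec_right)
  also have "\<dots> = (\<Sum>r'\<in>{1..n}. if r' = r then sc n m Ups u r' s k else 0)"
    by (rule sum.cong) (auto simp: basis_vec_def)
  finally show ?thesis using assms by (simp add: sum.delta)
qed

lemma Ups_eq_0_across_blocks:
  assumes alg: "is_Anm n m Ups u"
    and r: "r \<in> {m+1..n}" and s: "s \<in> {m+1..n}" and k: "k \<in> {1..n}" and lt: "max r s < k"
    and neq: "u s \<noteq> u k"
  shows "Ups r s k = 0"
proof -
  have km: "m < k" using lt r by auto
  have v: "u k \<in> {1..m}" and mn: "m \<le> n" using alg km k unfolding is_Anm_def by auto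
  have vn: "u k \<in> {1..n}" using v mn by auto
  have rn: "r \<in> {1..n}" and sn: "s \<in> {1..n}" using r s by auto
  have assoc: "amul n m Ups u (amul n m Ups u (basis_vec r) (basis_vec s)) (basis_vec (u k)) =
        amul n m Ups u (basis_vec r) (amul n m Ups u (basis_vec s) (basis_vec (u k)))"
    using alg rn sn vn unfolding is_Anm_def by (auto simp: basis_vec_def carrier_A_def)
  have left: "amul n m Ups u (amul n m Ups u (basis_vec r) (basis_vec s)) (basis_vec (u k)) k = Ups r s k"
  proof -
    have sc_col: "sc n m Ups u j (u k) k = (if j = k then 1 else 0)" for j
      using v km by (cases "j \<le> m") (auto simp: sc_11 sc_21)
    have inner: "amul n m Ups u (basis_vec r) (basis_vec s) = (\<lambda>j. sc n m Ups u r s j)"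
      by (intro ext) (rule amul_basis_vec[OF rn sn])
    have "amul n m Ups u (amul n m Ups u (basis_vec r) (basis_vec s)) (basis_vec (u k)) k
        = (\<Sum>j\<in>{1..n}. sc n m Ups u r s j * sc n m Ups u j (u k) k)"
      using vn by (simp only: inner amul_basis_vec_right)
    also have "\<dots> = (\<Sum>j\<in>{1..n}. if j = k then sc n m Ups u r s j else 0)"
      by (rule sum.cong[OF refl]) (simp add: sc_col)
    also have "\<dots> = Ups r s k" using r s lt k by (auto simp: sc_def)
    finally show ?thesis .
  qed
  have right: "amul n m Ups u (basis_vec s) (basis_vec (u k)) = (\<lambda>j. 0)"
    using vn sn v s neq by (auto simp: amul_basis_vec sc_21)
  from left have "amul n m Ups u (basis_vec r) (\<lambda>j. 0) k = Ups r s k"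
    by (simp only: assoc right)
  then show ?thesis by (simp add: amul_def)
qed

lemma lmul_coeff_diag:
  assumes alg: "is_Anm n m Ups u" and k: "k \<in> {1..n}"
  shows "lmul_coeff n m Ups u a b k k h = zmap m a b h (block_of m u k)"
proof -
  have "m \<le> n" "m < k \<Longrightarrow> u k \<in> {1..m}" using alg k unfolding is_Anm_def by auto
  then have bk: "block_of m u k \<in> {1..n}" using k unfolding block_of_def by auto
  have sc_diag: "sc n m Ups u r k k = (if r = block_of m u k then 1 else 0)" for r
    using alg k unfolding is_Anm_def block_of_def
    by (cases "r \<le> m"; cases "k \<le> m") (auto simp: sc_def)
  have "lmul_coeff n m Ups u a b k k h = (\<Sum>r\<in>{1..n}. if r = block_of m u k then zmap m a b h r else 0)"
    unfolding lmul_coeff_def by (rule sum.cong[OF refl]) (simp add: sc_diag)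
  then show ?thesis using bk by simp
qed

lemma sc_eq_0_outside_block:
  assumes alg: "is_Anm n m Ups u" and r: "r \<in> {1..n}" and k: "k \<in> {1..n}" and s: "s \<in> {1..n}"
    and ne: "s \<noteq> k" and nb: "\<not> (s < k \<and> block_of m u s = block_of m u k)"
  shows "sc n m Ups u r s k = 0"
proof (cases "m < r \<and> m < s \<and> max r s < k")
  case True
  then have "u s \<noteq> u k" using nb by (auto simp: block_of_def)
  then have "Ups r s k = 0" using Ups_eq_0_across_blocks[OF alg _ _ k] r s True by auto
  then show ?thesis using True by (simp add: sc_22)
next
  case False
  have "m < r \<Longrightarrow> r \<le> n \<Longrightarrow> u r \<le> m" using alg unfolding is_Anm_def by auto
  then show ?thesis using False r ne nb by (auto simp: sc_def block_of_def)
qed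

lemma lmul_coeff_eq_0_outside_block:
  assumes "is_Anm n m Ups u" "k \<in> {1..n}" "s \<in> {1..n}" "s \<noteq> k"
    "\<not> (s < k \<and> block_of m u s = block_of m u k)"
  shows "lmul_coeff n m Ups u a b k s h = 0"
  unfolding lmul_coeff_def using sc_eq_0_outside_block[OF assms(1) _ assms(2-)] by simp

lemma lmul_coeff_zero: "lmul_coeff n m Ups u a b k s 0 = 0"
  by (simp add: lmul_coeff_def zmap_def)

lemma lmul_coeff_minus: "lmul_coeff n m Ups u a b k s (- h) = - lmul_coeff n m Ups u a b k s h"
  by (simp add: lmul_coeff_def zmap_def sum_negf[symmetric] algebra_simps)

lemma sum_lmul_coeff_triangular:
  assumes alg: "is_Anm n m Ups u" and k: "k \<in> {1..n}"
  shows "(\<Sum>s\<in>{1..n}. lmul_coeff n m Ups u a b k s h * X s)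
    = zmap m a b h (block_of m u k) * X k
      + (\<Sum>s\<in>{s\<in>{1..n}. s < k \<and> block_of m u s = block_of m u k}. lmul_coeff n m Ups u a b k s h * X s)"
proof -
  have "(\<Sum>s\<in>{1..n}. lmul_coeff n m Ups u a b k s h * X s)
      = lmul_coeff n m Ups u a b k k h * X k + (\<Sum>s\<in>{1..n} - {k}. lmul_coeff n m Ups u a b k s h * X s)"
    using k by (simp add: sum.remove)
  also have "(\<Sum>s\<in>{1..n} - {k}. lmul_coeff n m Ups u a b k s h * X s)
      = (\<Sum>s\<in>{s\<in>{1..n}. s < k \<and> block_of m u s = block_of m u k}. lmul_coeff n m Ups u a b k s h * X s)"
    using lmul_coeff_eq_0_outside_block[OF alg k] by (intro sum.mono_neutral_right) auto
  finally show ?thesis by (simp add: lmul_coeff_diag[OF alg k])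
qed

section \<open>The Morera argument\<close>

locale morera_setting =
  fixes n m :: nat
    and Ups :: "nat \<Rightarrow> nat \<Rightarrow> nat \<Rightarrow> complex" and u :: "nat \<Rightarrow> nat"
    and a b :: alg
    and Omega :: "(real \<times> real \<times> real) set"
    and Phi :: "alg \<Rightarrow> alg"
  assumes alg: "is_Anm n m Ups u"
    and standing: "\<forall>v\<in>{1..m}. range (\<lambda>p. zmap m a b p v) = UNIV"
    and open_Omega: "open Omega"
    and cont: "continuous_on (zmap m a b ` Omega) Phi"
    and into: "Phi ` (zmap m a b ` Omega) \<subseteq> carrier_A n"
    and tri: "\<forall>A B C. \<not> collinear {A, B, C} \<and>
                 zmap m a b ` (convex hull {A, B, C}) \<subseteq> zmap m a b ` Omega
                 \<longrightarrow> bnd_integral n m Ups u a b Phi A B C = (\<lambda>_. 0)"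
begin

abbreviation \<mu> :: "nat \<Rightarrow> nat \<Rightarrow> R3 \<Rightarrow> complex" where "\<mu> \<equiv> lmul_coeff n m Ups u a b"

definition Phi_pt :: "R3 \<Rightarrow> alg" where "Phi_pt p = Phi (zmap m a b p)"

definition seg_mean :: "R3 \<Rightarrow> R3 \<Rightarrow> nat \<Rightarrow> complex" where
  "seg_mean P Q s = integral {0..1} (\<lambda>t. Phi_pt (P + t *\<^sub>R (Q - P)) s)"

text \<open>The \<open>k\<close>-th component of the integral of \<open>\<Phi> d\<zeta>\<close> over \<open>[P, Q]\<close>, which equals
  \<open>\<zeta>(Q) - \<zeta>(P)\<close> times the mean value of \<open>\<Phi>\<close> on the segment.\<close>
definition seg_int :: "R3 \<Rightarrow> R3 \<Rightarrow> nat \<Rightarrow> complex" where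
  "seg_int P Q k = (\<Sum>s\<in>{1..n}. \<mu> k s (Q - P) * seg_mean P Q s)"

lemma continuous_on_Phi_pt: "continuous_on Omega (\<lambda>p. Phi_pt p s)"
proof -
  have "continuous_on S (zmap m a b)" for S
    by (intro continuous_on_coordinatewise_then_product linear_continuous_on bounded_linear_zmap_component)
  then have "continuous_on Omega (Phi \<circ> zmap m a b)"
    by (rule continuous_on_compose[OF _ cont])
  then show ?thesis unfolding Phi_pt_def o_def by (rule continuous_on_product_then_coordinatewise)
qed

lemma seg_int_eq_edge_ints:
  assumes k: "k \<in> {1..n}"
  shows "seg_int P Q k = edge_int (\<lambda>p. Phi_pt p k) P Q fst
     + amul n m Ups u a (\<lambda>s. edge_int (\<lambda>p. Phi_pt p s) P Q (\<lambda>v. fst (snd v))) k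
     + amul n m Ups u b (\<lambda>s. edge_int (\<lambda>p. Phi_pt p s) P Q (\<lambda>v. snd (snd v))) k"
proof -
  define d where "d = Q - P"
  have edge: "edge_int (\<lambda>p. Phi_pt p s) P Q c = seg_mean P Q s * of_real (c d)" for s c
    unfolding edge_int_def seg_mean_def d_def by simp
  have "seg_int P Q k = amul n m Ups u (zmap m a b d) (seg_mean P Q) k"
    unfolding seg_int_def amul_zmap_eq_sum_lmul_coeff d_def ..
  also have "\<dots> = of_real (fst d) * seg_mean P Q k + of_real (fst (snd d)) * amul n m Ups u a (seg_mean P Q) k
      + of_real (snd (snd d)) * amul n m Ups u b (seg_mean P Q) k"
    by (simp only: amul_zmap_split amul_unitA_left[OF alg k])
  finally show ?thesis by (simp only: edge amul_cmult_right) (simp add: ac_simps)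
qed

lemma bnd_integral_eq_seg_ints:
  assumes k: "k \<in> {1..n}"
  shows "bnd_integral n m Ups u a b Phi A B C k = seg_int A B k + seg_int B C k + seg_int C A k"
proof -
  let ?J = "\<lambda>c s. if s \<in> {1..n} then tri_int (\<lambda>p. Phi (zmap m a b p) s) A B C c else 0"
  let ?e = "\<lambda>c s. edge_int (\<lambda>p. Phi_pt p s) A B c + edge_int (\<lambda>p. Phi_pt p s) B C c
      + edge_int (\<lambda>p. Phi_pt p s) C A c"
  have J: "?J c s = ?e c s" if "s \<in> {1..n}" for c s
    using that unfolding tri_int_def Phi_pt_def by simp
  have "bnd_integral n m Ups u a b Phi A B C k
      = ?J fst k + amul n m Ups u a (?J (\<lambda>v. fst (snd v))) k + amul n m Ups u b (?J (\<lambda>v. snd (snd v))) k"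
    unfolding bnd_integral_def Let_def by simp
  also have "\<dots> = ?e fst k + amul n m Ups u a (?e (\<lambda>v. fst (snd v))) k
      + amul n m Ups u b (?e (\<lambda>v. snd (snd v))) k"
  proof -
    have "amul n m Ups u x (?J c) k = amul n m Ups u x (?e c) k" for x c
      by (rule amul_cong_right) (rule J)
    then show ?thesis by (simp only: J[OF k])
  qed
  finally show ?thesis by (simp add: seg_int_eq_edge_ints[OF k] amul_add_right algebra_simps)
qed

lemma seg_mean_swap: "seg_mean Q P s = seg_mean P Q s"
proof -
  have "seg_mean Q P s = integral {0..1} (\<lambda>t. (\<lambda>t. Phi_pt (P + t *\<^sub>R (Q - P)) s) (1 - t))"
    unfolding seg_mean_def by (rule integral_cong) (simp add: algebra_simps)
  also have "\<dots> = seg_mean P Q s" unfolding seg_mean_def by (rule integral_reflect_01)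
  finally show ?thesis .
qed

lemma seg_int_swap: "seg_int Q P k = - seg_int P Q k"
proof -
  have "\<mu> k s (P - Q) = - \<mu> k s (Q - P)" for s
    using lmul_coeff_minus[of n m Ups u a b k s "Q - P"] by simp
  then show ?thesis unfolding seg_int_def sum_negf[symmetric]
    by (intro sum.cong refl) (simp add: seg_mean_swap)
qed

lemma seg_int_triangle:
  assumes nc: "\<not> collinear {A, B, C}" and S: "convex S" "S \<subseteq> Omega" and ABC: "A \<in> S" "B \<in> S" "C \<in> S"
    and k: "k \<in> {1..n}"
  shows "seg_int A B k + seg_int B C k + seg_int C A k = 0"
proof -
  have "convex hull {A, B, C} \<subseteq> S" using S(1) ABC by (simp add: hull_minimal)
  then have "zmap m a b ` (convex hull {A, B, C}) \<subseteq> zmap m a b ` Omega" using S(2) by blast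
  then have "bnd_integral n m Ups u a b Phi A B C = (\<lambda>_. 0)" using tri nc by blast
  then show ?thesis using bnd_integral_eq_seg_ints[OF k, of A B C] by simp
qed

lemma continuous_on_seg_mean:
  assumes S: "convex S" "S \<subseteq> Omega" and P: "P \<in> S"
  shows "continuous_on S (\<lambda>q. seg_mean P q s)"
proof -
  have "(\<lambda>z. P + snd z *\<^sub>R (fst z - P)) ` (S \<times> cbox 0 1) \<subseteq> Omega"
  proof clarsimp
    fix q and t :: real assume "q \<in> S" "0 \<le> t" "t \<le> 1"
    then have "(1 - t) *\<^sub>R P + t *\<^sub>R q \<in> S" using S(1) P by (intro convexD) auto
    then show "P + t *\<^sub>R (q - P) \<in> Omega" using S(2) by (auto simp: algebra_simps)
  qed
  then have "continuous_on (S \<times> cbox 0 1) (\<lambda>z. Phi_pt (P + snd z *\<^sub>R (fst z - P)) s)"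
    by (intro continuous_on_compose2[OF continuous_on_Phi_pt] continuous_intros)
  then have "continuous_on S (\<lambda>q. integral (cbox 0 1) (\<lambda>t. Phi_pt (P + t *\<^sub>R (q - P)) s))"
    by (intro integral_continuous_on_param) (simp add: case_prod_beta)
  then show ?thesis unfolding seg_mean_def by simp
qed

lemma continuous_on_seg_int:
  assumes "convex S" "S \<subseteq> Omega" "P \<in> S"
  shows "continuous_on S (\<lambda>q. seg_int P q k)"
proof -
  have "continuous_on S (\<lambda>q. \<mu> k s (q - P))" for s
    by (rule bounded_linear.continuous_on[OF bounded_linear_lmul_coeff]) (intro continuous_intros)
  then show ?thesis unfolding seg_int_def
    by (intro continuous_intros continuous_on_seg_mean[OF assms])
qed

lemma seg_int_additive:
  assumes S: "ball p0 \<epsilon> \<subseteq> Omega" and p: "p \<in> ball p0 \<epsilon>" and q: "q \<in> ball p0 \<epsilon>" and k: "k \<in> {1..n}"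
  shows "seg_int p0 q k = seg_int p0 p k + seg_int p q k"
proof -
  let ?B = "ball p0 \<epsilon>"
  have p0B: "p0 \<in> ?B" using p by (auto intro: le_less_trans[OF zero_le_dist])
  have non_collinear: "seg_int p0 q' k = seg_int p0 p k + seg_int p q' k"
    if "q' \<in> ?B" "\<not> collinear {p0, p, q'}" for q'
    using seg_int_triangle[OF that(2) convex_ball S p0B p that(1) k] seg_int_swap[of q' p0 k]
    by (simp add: algebra_simps)
  consider "p = p0" | "\<not> collinear {p0, p, q}" | "p \<noteq> p0" "collinear {p0, p, q}" by blast
  then show ?thesis
  proof cases
    case 1
    then show ?thesis by (simp add: seg_int_def lmul_coeff_zero)
  next
    case 2
    then show ?thesis using non_collinear q by blast
  next
    case 3
    txt \<open>Degenerate triangles are limits of non-degenerate ones.\<close>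
    obtain v where v: "\<And>c. v \<noteq> c *\<^sub>R (p - p0)" using exists_not_parallel_R3 by blast
    let ?\<phi> = "\<lambda>q'. seg_int p0 q' k - seg_int p0 p k - seg_int p q' k"
    have "continuous_on ?B ?\<phi>"
      by (intro continuous_intros continuous_on_seg_int[OF convex_ball S p0B]
          continuous_on_seg_int[OF convex_ball S p])
    then have "isCont ?\<phi> q" using q by (simp add: continuous_on_eq_continuous_at)
    moreover have "\<forall>\<^sub>F e in at_right 0. ?\<phi> (q + e *\<^sub>R v) = 0"
    proof -
      have "((\<lambda>e. q + e *\<^sub>R v) \<longlongrightarrow> q) (at_right 0)"
        by (rule tendsto_eq_intros refl)+ simp
      then have "\<forall>\<^sub>F e in at_right 0. q + e *\<^sub>R v \<in> ?B"
        using topological_tendstoD open_ball q by blast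
      then show ?thesis using eventually_at_right_less[of 0]
        by eventually_elim (simp add: non_collinear not_collinear_shift[OF 3(2,1) v])
    qed
    ultimately have "?\<phi> q = 0" by (rule eq_0_if_eventually_0_along_ray)
    then show ?thesis by (simp add: algebra_simps)
  qed
qed

lemma seg_int_has_derivative:
  assumes S: "ball p0 \<epsilon> \<subseteq> Omega" and p: "p \<in> ball p0 \<epsilon>" and k: "k \<in> {1..n}"
  shows "((\<lambda>q. seg_int p0 q k) has_derivative (\<lambda>h. \<Sum>s\<in>{1..n}. \<mu> k s h * Phi_pt p s)) (at p)"
proof -
  have "isCont (\<lambda>q. seg_mean p q s) p" for s
    using continuous_on_seg_mean[OF convex_ball S p] p by (simp add: continuous_on_eq_continuous_at)
  then have "((\<lambda>q. seg_int p0 p k + seg_int p q k) has_derivative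
      (\<lambda>h. 0 + (\<Sum>s\<in>{1..n}. \<mu> k s h * seg_mean p p s))) (at p)"
    unfolding seg_int_def
    by (intro has_derivative_add has_derivative_const has_derivative_sum
        has_derivative_linear_times_continuous bounded_linear_lmul_coeff)
  then have "((\<lambda>q. seg_int p0 p k + seg_int p q k) has_derivative
      (\<lambda>h. \<Sum>s\<in>{1..n}. \<mu> k s h * Phi_pt p s)) (at p)"
    by (simp add: seg_mean_def)
  then show ?thesis
    by (rule has_derivative_transform_within_open[OF _ open_ball p])
       (use seg_int_additive[OF S p _ k] in simp)
qed

lemma block_of_in_range: "k \<in> {1..n} \<Longrightarrow> block_of m u k \<in> {1..m}"
  using alg unfolding is_Anm_def block_of_def by auto

lemma block_chart_exists:
  assumes "u0 \<in> {1..m}" "\<epsilon> > 0"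
  obtains \<rho> x y \<kappa> \<delta> where "chart (\<lambda>h. zmap m a b h u0) \<rho> \<delta> x y \<kappa>"
    "chart.nbhd (\<lambda>h. zmap m a b h u0) \<rho> p0 \<delta> \<subseteq> ball p0 \<epsilon>"
proof -
  have zeq: "(\<lambda>h. zmap m a b h u0) = (\<lambda>h. complex_of_real (fst h) + complex_of_real (fst (snd h)) * a u0
      + complex_of_real (snd (snd h)) * b u0)"
    using assms(1) by (auto simp: zmap_def unitA_def)
  have "\<i> \<in> range (\<lambda>h. zmap m a b h u0)" using standing assms(1) by auto
  then obtain \<rho> x y \<kappa> where C: "\<forall>\<delta>>0. chart (\<lambda>h. zmap m a b h u0) \<rho> \<delta> x y \<kappa>"
    using chart_exists[of "a u0" "b u0"] unfolding zeq by blast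
  define \<delta> where "\<delta> = \<epsilon> / (norm x + norm y + norm \<kappa> + 1)"
  have "0 \<le> norm x + norm y + norm \<kappa>" by simp
  then have pos: "norm x + norm y + norm \<kappa> + 1 > 0" by linarith
  then have "chart (\<lambda>h. zmap m a b h u0) \<rho> \<delta> x y \<kappa>"
    using C assms(2) by (simp add: \<delta>_def)
  moreover from this have "chart.nbhd (\<lambda>h. zmap m a b h u0) \<rho> p0 \<delta> \<subseteq> ball p0 \<epsilon>"
    using chart.nbhd_subset_ball pos by (fastforce simp: \<delta>_def)
  ultimately show thesis by (rule that)
qed

text \<open>Only earlier indices of the same block enter the derivative of \<open>seg_int p0 \<cdot> k\<close>, which makes
  the induction along the triangular order work.\<close>
lemma block_components_mixed_poly:
  assumes S: "ball p0 \<epsilon> \<subseteq> Omega" and C: "chart \<xi> \<rho> \<delta> x y \<kappa>" and N: "chart.nbhd \<xi> \<rho> p0 \<delta> \<subseteq> ball p0 \<epsilon>"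
    and \<xi>: "\<xi> = (\<lambda>h. zmap m a b h u0)"
  shows "k \<in> {1..n} \<Longrightarrow> block_of m u k = u0 \<Longrightarrow>
    chart.mixed_poly_fun \<xi> \<rho> p0 \<delta> (\<lambda>p. Phi_pt p k) \<and> chart.mixed_poly_fun \<xi> \<rho> p0 \<delta> (\<lambda>p. seg_int p0 p k)"
proof (induction k rule: less_induct)
  case (less k)
  interpret chart \<xi> \<rho> p0 \<delta> x y \<kappa> by (rule C)
  define S' where "S' = {s\<in>{1..n}. s < k \<and> block_of m u s = block_of m u k}"
  have IH: "mixed_poly_fun (\<lambda>p. Phi_pt p s)" if "s \<in> S'" for s
    using less that by (auto simp: S'_def)
  let ?X = "\<lambda>s. (\<mu> k s x - \<i> * \<mu> k s y) / 2" and ?Y = "\<lambda>s. (\<mu> k s x + \<i> * \<mu> k s y) / 2"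
    and ?Z = "\<lambda>s. \<mu> k s \<kappa>"
  have DG: "((\<lambda>q. seg_int p0 q k) has_derivative (\<lambda>h. \<Sum>s\<in>{1..n}. \<mu> k s h * Phi_pt p s)) (at p)"
    if "p \<in> nbhd" for p
    using seg_int_has_derivative[OF S _ less.prems(1)] N that by blast
  have decomp: "(\<Sum>s\<in>{1..n}. \<mu> k s h * Phi_pt p s) = wr_form (Phi_pt p k + (\<Sum>s\<in>S'. ?X s * Phi_pt p s))
      (\<Sum>s\<in>S'. ?Y s * Phi_pt p s) (\<Sum>s\<in>S'. ?Z s * Phi_pt p s) h" for p h
  proof -
    have "(\<Sum>s\<in>{1..n}. \<mu> k s h * Phi_pt p s) = \<xi> h * Phi_pt p k + (\<Sum>s\<in>S'. \<mu> k s h * Phi_pt p s)"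
      using sum_lmul_coeff_triangular[OF alg less.prems(1)] less.prems(2) by (simp add: S'_def \<xi>)
    also have "(\<Sum>s\<in>S'. \<mu> k s h * Phi_pt p s) = wr_form (\<Sum>s\<in>S'. ?X s * Phi_pt p s)
        (\<Sum>s\<in>S'. ?Y s * Phi_pt p s) (\<Sum>s\<in>S'. ?Z s * Phi_pt p s) h"
      by (rule sum_wr_form_decomposition[OF bounded_linear_lmul_coeff])
    finally show ?thesis by (simp add: distrib_left add.assoc)
  qed
  have G: "mixed_poly_fun (\<lambda>p. seg_int p0 p k)"
  proof (rule mixed_poly_fun_of_derivative)
    show "mixed_poly_fun (\<lambda>p. \<Sum>s\<in>S'. ?Y s * Phi_pt p s)" "mixed_poly_fun (\<lambda>p. \<Sum>s\<in>S'. ?Z s * Phi_pt p s)"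
      by (intro mixed_poly_fun_sum mixed_poly_fun_cmult IH; simp add: S'_def)+
    show "((\<lambda>p. seg_int p0 p k) has_derivative wr_form (Phi_pt p k + (\<Sum>s\<in>S'. ?X s * Phi_pt p s))
      (\<Sum>s\<in>S'. ?Y s * Phi_pt p s) (\<Sum>s\<in>S'. ?Z s * Phi_pt p s)) (at p)" if "p \<in> nbhd" for p
      using DG[OF that] by (simp only: decomp)
  qed
  have "mixed_poly_fun (\<lambda>p. \<Sum>s\<in>{1..n}. \<mu> k s (1, 0, 0) * Phi_pt p s)"
    by (rule mixed_poly_fun_derivative_apply[OF G DG])
  then have "mixed_poly_fun (\<lambda>p. Phi_pt p k)"
    by (simp only: sum_lmul_coeff_e1[OF alg less.prems(1)])
  with G show ?case by blast
qed

lemma mixed_poly_chart_at: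
  assumes p0: "p0 \<in> Omega" and k: "k \<in> {1..n}"
  obtains \<xi> \<rho> \<delta> x y \<kappa> where "chart \<xi> \<rho> \<delta> x y \<kappa>"
    "chart.mixed_poly_fun \<xi> \<rho> p0 \<delta> (\<lambda>p. Phi_pt p k)" "chart.mixed_poly_fun \<xi> \<rho> p0 \<delta> (\<lambda>p. seg_int p0 p k)"
    "\<And>q. q \<in> chart.nbhd \<xi> \<rho> p0 \<delta> \<Longrightarrow>
       ((\<lambda>q. seg_int p0 q k) has_derivative (\<lambda>h. \<Sum>s\<in>{1..n}. \<mu> k s h * Phi_pt q s)) (at q)"
proof -
  obtain \<epsilon> where e: "\<epsilon> > 0" and S: "ball p0 \<epsilon> \<subseteq> Omega"
    using open_Omega p0 open_contains_ball by blast
  obtain \<rho> x y \<kappa> \<delta> where C: "chart (\<lambda>h. zmap m a b h (block_of m u k)) \<rho> \<delta> x y \<kappa>"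
    and N: "chart.nbhd (\<lambda>h. zmap m a b h (block_of m u k)) \<rho> p0 \<delta> \<subseteq> ball p0 \<epsilon>"
    by (rule block_chart_exists[OF block_of_in_range[OF k] e])
  have FG: "chart.mixed_poly_fun (\<lambda>h. zmap m a b h (block_of m u k)) \<rho> p0 \<delta> (\<lambda>p. Phi_pt p k)
      \<and> chart.mixed_poly_fun (\<lambda>h. zmap m a b h (block_of m u k)) \<rho> p0 \<delta> (\<lambda>p. seg_int p0 p k)"
    by (rule block_components_mixed_poly[OF S C N refl k refl])
  have DG: "((\<lambda>q. seg_int p0 q k) has_derivative (\<lambda>h. \<Sum>s\<in>{1..n}. \<mu> k s h * Phi_pt q s)) (at q)"
    if "q \<in> chart.nbhd (\<lambda>h. zmap m a b h (block_of m u k)) \<rho> p0 \<delta>" for q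
    using seg_int_has_derivative[OF S _ k] N that by blast
  from FG show thesis by (blast intro: that[OF C] DG)
qed

lemma Phi_pt_differentiable:
  assumes "p0 \<in> Omega" "k \<in> {1..n}"
  shows "(\<lambda>p. Phi_pt p k) differentiable (at p0)"
proof -
  obtain \<xi> \<rho> \<delta> x y \<kappa> where C: "chart \<xi> \<rho> \<delta> x y \<kappa>"
    and F: "chart.mixed_poly_fun \<xi> \<rho> p0 \<delta> (\<lambda>p. Phi_pt p k)"
    and "chart.mixed_poly_fun \<xi> \<rho> p0 \<delta> (\<lambda>p. seg_int p0 p k)"
    and "\<And>q. q \<in> chart.nbhd \<xi> \<rho> p0 \<delta> \<Longrightarrow>
       ((\<lambda>q. seg_int p0 q k) has_derivative (\<lambda>h. \<Sum>s\<in>{1..n}. \<mu> k s h * Phi_pt q s)) (at q)"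
    using mixed_poly_chart_at[OF assms] by blast
  show ?thesis by (rule chart.mixed_poly_fun_differentiable[OF C F chart.p0_in_nbhd[OF C]])
qed

lemma Phi_pt_derivative_eq_lmul:
  assumes p0: "p0 \<in> Omega" and k: "k \<in> {1..n}"
    and DF: "\<forall>s\<in>{1..n}. ((\<lambda>p. Phi_pt p s) has_derivative DF s) (at p0)"
  shows "DF k h = (\<Sum>s\<in>{1..n}. \<mu> k s h * DF s (1, 0, 0))"
proof -
  obtain \<xi> \<rho> \<delta> x y \<kappa> where C: "chart \<xi> \<rho> \<delta> x y \<kappa>"
    and "chart.mixed_poly_fun \<xi> \<rho> p0 \<delta> (\<lambda>p. Phi_pt p k)"
    and G: "chart.mixed_poly_fun \<xi> \<rho> p0 \<delta> (\<lambda>p. seg_int p0 p k)"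
    and DG: "\<And>q. q \<in> chart.nbhd \<xi> \<rho> p0 \<delta> \<Longrightarrow>
       ((\<lambda>q. seg_int p0 q k) has_derivative (\<lambda>h. \<Sum>s\<in>{1..n}. \<mu> k s h * Phi_pt q s)) (at q)"
    using mixed_poly_chart_at[OF p0 k] by blast
  interpret chart \<xi> \<rho> p0 \<delta> x y \<kappa> by (rule C)
  obtain G' G'' where G': "\<And>p. p \<in> nbhd \<Longrightarrow> ((\<lambda>p. seg_int p0 p k) has_derivative (\<lambda>h. G' h p)) (at p)"
    and G'': "\<And>h p. p \<in> nbhd \<Longrightarrow> (G' h has_derivative (\<lambda>k. G'' h k p)) (at p)"
    and sym: "\<And>h k p. p \<in> nbhd \<Longrightarrow> G'' h k p = G'' k h p"
    using mixed_poly_fun_second_derivative_symmetric[OF G] by blast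
  have G'_eq: "G' h q = (\<Sum>s\<in>{1..n}. \<mu> k s h * Phi_pt q s)" if "q \<in> nbhd" for h q
    using fun_cong[OF has_derivative_unique[OF G'[OF that] DG[OF that]]] .
  txt \<open>Near \<open>p0\<close>, \<open>Phi_pt \<cdot> k = G' (1, 0, 0)\<close>; then use the symmetry of \<open>G''\<close>.\<close>
  have "((\<lambda>p. Phi_pt p k) has_derivative (\<lambda>h. G'' (1, 0, 0) h p0)) (at p0)"
    by (rule has_derivative_transform_within_open[OF G''[OF p0_in_nbhd] open_nbhd p0_in_nbhd])
       (simp only: G'_eq sum_lmul_coeff_e1[OF alg k])
  then have "DF k h = G'' (1, 0, 0) h p0"
    using has_derivative_unique[OF DF[rule_format, OF k]] by metis
  also have "\<dots> = G'' h (1, 0, 0) p0" by (rule sym[OF p0_in_nbhd])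
  also have "\<dots> = (\<Sum>s\<in>{1..n}. \<mu> k s h * DF s (1, 0, 0))"
  proof -
    have "((\<lambda>q. \<Sum>s\<in>{1..n}. \<mu> k s h * Phi_pt q s) has_derivative (\<lambda>v. \<Sum>s\<in>{1..n}. \<mu> k s h * DF s v)) (at p0)"
      using DF by (intro has_derivative_sum has_derivative_mult_right) auto
    then have "(G' h has_derivative (\<lambda>v. \<Sum>s\<in>{1..n}. \<mu> k s h * DF s v)) (at p0)"
      by (rule has_derivative_transform_within_open[OF _ open_nbhd p0_in_nbhd]) (simp only: G'_eq)
    from has_derivative_unique[OF G''[OF p0_in_nbhd] this] show ?thesis by meson
  qed
  finally show ?thesis .
qed

lemma Phi_pt_eq_0_outside:
  assumes "p \<in> Omega" "k \<notin> {1..n}"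
  shows "Phi_pt p k = 0"
  using into assms unfolding Phi_pt_def carrier_A_def by auto

lemma Phi_pt_right_difference_quotient:
  assumes p0: "p0 \<in> Omega"
    and DF: "\<forall>s\<in>{1..n}. ((\<lambda>p. Phi_pt p s) has_derivative DF s) (at p0)"
  defines "Phi' \<equiv> \<lambda>s. if s \<in> {1..n} then DF s (1, 0, 0) else 0"
  shows "((\<lambda>e. (Phi_pt (p0 + e *\<^sub>R h) k - Phi_pt p0 k) / complex_of_real e)
           \<longlongrightarrow> amul n m Ups u (zmap m a b h) Phi' k) (at_right 0)"
proof (cases "k \<in> {1..n}")
  case True
  have "DF k h = amul n m Ups u (zmap m a b h) Phi' k"
    unfolding amul_zmap_eq_sum_lmul_coeff Phi_pt_derivative_eq_lmul[OF p0 True DF] Phi'_def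
    by (rule sum.cong) auto
  with has_derivative_imp_right_difference_quotient[OF DF[rule_format, OF True], of h] show ?thesis
    by simp
next
  case False
  have "((\<lambda>e. p0 + e *\<^sub>R h) \<longlongrightarrow> p0) (at_right 0)"
    by (rule tendsto_eq_intros refl)+ simp
  then have "\<forall>\<^sub>F e in at_right 0. p0 + e *\<^sub>R h \<in> Omega"
    using topological_tendstoD open_Omega p0 by blast
  then have "\<forall>\<^sub>F e in at_right 0. (Phi_pt (p0 + e *\<^sub>R h) k - Phi_pt p0 k) / complex_of_real e = 0"
    by eventually_elim (simp add: Phi_pt_eq_0_outside[OF _ False] p0)
  then show ?thesis
    by (simp add: amul_eq_0_outside[OF False] tendsto_eventually)
qed

lemma monogenic_Phi: "monogenic n m Ups u a b Phi (zmap m a b ` Omega)"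
  unfolding monogenic_def Let_def
proof
  fix \<zeta> assume "\<zeta> \<in> zmap m a b ` Omega"
  then obtain p0 where p0: "p0 \<in> Omega" and \<zeta>: "\<zeta> = zmap m a b p0" by auto
  obtain DF where DF: "\<forall>s\<in>{1..n}. ((\<lambda>p. Phi_pt p s) has_derivative DF s) (at p0)"
    using Phi_pt_differentiable[OF p0] unfolding differentiable_def by metis
  define Phi' where "Phi' = (\<lambda>s. if s \<in> {1..n} then DF s (1, 0, 0) else 0)"
  have "Phi' \<in> carrier_A n" unfolding Phi'_def carrier_A_def by auto
  moreover have "((\<lambda>e. \<lambda>k. (Phi (\<lambda>j. \<zeta> j + complex_of_real e * zmap m a b h j) k - Phi \<zeta> k) / complex_of_real e)
      \<longlongrightarrow> amul n m Ups u (zmap m a b h) Phi') (at_right 0)" for h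
  proof (rule tendsto_fun_componentwise)
    fix k
    have "(\<lambda>j. \<zeta> j + complex_of_real e * zmap m a b h j) = zmap m a b (p0 + e *\<^sub>R h)" for e
      unfolding \<zeta> by (auto simp: zmap_def algebra_simps)
    then show "((\<lambda>e. (Phi (\<lambda>j. \<zeta> j + complex_of_real e * zmap m a b h j) k - Phi \<zeta> k) / complex_of_real e)
        \<longlongrightarrow> amul n m Ups u (zmap m a b h) Phi' k) (at_right 0)"
      using Phi_pt_right_difference_quotient[OF p0 DF, of h k] by (simp add: Phi_pt_def \<zeta> Phi'_def)
  qed
  ultimately show "\<exists>Phi'\<in>carrier_A n. \<forall>h.
      ((\<lambda>e. \<lambda>k. (Phi (\<lambda>j. \<zeta> j + complex_of_real e * zmap m a b h j) k - Phi \<zeta> k) / complex_of_real e)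
        \<longlongrightarrow> amul n m Ups u (zmap m a b h) Phi') (at_right 0)"
    by blast
qed

end

theorem theorem3:
  fixes n m :: nat
    and Ups :: "nat \<Rightarrow> nat \<Rightarrow> nat \<Rightarrow> complex" and u :: "nat \<Rightarrow> nat"
    and a b :: alg
    and Omega :: "(real \<times> real \<times> real) set"
    and Phi :: "alg \<Rightarrow> alg"
  assumes alg: "is_Anm n m Ups u"
    and a: "a \<in> carrier_A n" and b: "b \<in> carrier_A n"
    and lin_indep: "\<forall>x y z. zmap m a b (x, y, z) = (\<lambda>_. 0) \<longrightarrow> x = 0 \<and> y = 0 \<and> z = 0"
    and standing: "\<forall>v\<in>{1..m}. range (\<lambda>p. zmap m a b p v) = UNIV"
    and domain: "open Omega" "connected Omega" "Omega \<noteq> {}"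
    and cont: "continuous_on (zmap m a b ` Omega) Phi"
    and into: "Phi ` (zmap m a b ` Omega) \<subseteq> carrier_A n"
    and tri: "\<forall>A B C. \<not> collinear {A, B, C} \<and>
                 zmap m a b ` (convex hull {A, B, C}) \<subseteq> zmap m a b ` Omega
                 \<longrightarrow> bnd_integral n m Ups u a b Phi A B C = (\<lambda>_. 0)"
  shows "monogenic n m Ups u a b Phi (zmap m a b ` Omega)"
proof -
  interpret morera_setting n m Ups u a b Omega Phi
    using alg standing domain(1) cont into tri by unfold_locales
  show ?thesis by (rule monogenic_Phi)
qed

end
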